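(* Let $l>0$ and let $a\in L^\infty(-l,l)$ be an odd function. Let $b\in W^{1,\infty}(-l,l)$ be a primitive of $a$ ($b'=a$ a.e.), set $b_1:=\min_{0\le x\le l}b(x)$, $b_2:=\max_{0\le x\le l}b(x)$, $b_0:=b_2-b_1$, $B_i:=\{x\in[0,l]:\ b(x)=b_i\}$ ($i=1,2$), and assume $\max_{x\in B_1}x<\min_{y\in B_2}y$. For $p>0$ let $\lambda_1(p)>0$ be the principal eigenvalue of $$-u''+p\,a(x)u'=\lambda u\ \ (-l<x<l),\qquad u(-l)=u(l)=0,\qquad u>0\text{ on }(-l,l).$$ Then $$\lim_{p\to\infty}\frac1p\log\frac1{\lambda_1(p)}=b_0 .$$ Equivalently, for every $\varepsilon\in(0,b_0)$ there exists $p_0>0$ such that $e^{-p(b_0+\varepsilon)}\le\lambda_1(p)\le e^{-p(b_0-\varepsilon)}$ for all $p\ge p_0$. *)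

theory Defs
  imports "HOL-Analysis.Analysis"
begin

text \<open>Strong (W^{2,1}) solutions of the Dirichlet problem
  -u'' + p a(x) u' = lam u on (-l,l), u(-l) = u(l) = 0, u > 0 on (-l,l).
  u is C^1 on [-l,l] with derivative u', and u' is absolutely continuous with
  a.e. derivative u'' (i.e. u' is the indefinite integral of an L^1 function u''),
  and the equation holds almost everywhere.\<close>
definition positive_eigenpair ::
  "(real \<Rightarrow> real) \<Rightarrow> real \<Rightarrow> real \<Rightarrow> real \<Rightarrow> (real \<Rightarrow> real) \<Rightarrow> bool" where
  "positive_eigenpair a l p lam u \<longleftrightarrow>
     (\<exists>u' u''.
        (\<forall>x\<in>{-l..l}. (u has_real_derivative u' x) (at x within {-l..l})) \<and>
        u'' absolutely_integrable_on {-l..l} \<and>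
        (\<forall>x\<in>{-l..l}. u' x = u' (-l) + integral {-l..x} u'') \<and>
        (AE x in lborel. x \<in> {-l<..<l} \<longrightarrow> - u'' x + p * a x * u' x = lam * u x)) \<and>
     u (-l) = 0 \<and> u l = 0 \<and> (\<forall>x\<in>{-l<..<l}. u x > 0)"

definition principal_eigenvalue :: "(real \<Rightarrow> real) \<Rightarrow> real \<Rightarrow> real \<Rightarrow> real" where
  "principal_eigenvalue a l p = (THE lam. \<exists>u. positive_eigenpair a l p lam u)"

end

theory Submission
  imports Defs
begin

text \<open>With the weight \<open>w = exp (-p b)\<close> the equation becomes \<open>(w u')' = -\<lambda> w u\<close>, so \<open>\<lambda>\<^sub>1(p)\<close> is a
  weighted Dirichlet eigenvalue. Testing a positive eigenfunction against the torsion function of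
  \<open>(w T')' = -w\<close> gives \<open>\<lambda>\<^sub>1 \<ge> exp (-p (max b - min b)) / (4 l\<^sup>2)\<close>. Conversely, since \<open>a\<close> is odd, \<open>b\<close> is
  even; Picone's identity with a trapezoidal test function, equal to \<open>1\<close> on \<open>[-s, s]\<close> around a
  near-minimum point of \<open>b\<close> and sloping on \<open>\<plusminus>[s, t]\<close> where \<open>b\<close> is nearly maximal (possible by the
  hypothesis on \<open>B\<^sub>1\<close>, \<open>B\<^sub>2\<close>), gives \<open>\<lambda>\<^sub>1 \<le> C\<^sub>\<epsilon> exp (-p (b\<^sub>0 - \<epsilon>))\<close>. Existence of the positive eigenpair is proved by
  shooting from the left end along a Neumann series, and uniqueness of the eigenvalue by a
  weighted Wronskian.\<close>

lemma AE_lborel_negligibleE: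
  assumes "AE x in lborel. P x"
  obtains N where "negligible N" "\<And>x. x \<notin> N \<Longrightarrow> P x"
proof -
  from assms obtain N where N: "{x \<in> space lborel. \<not> P x} \<subseteq> N" "emeasure lborel N = 0" "N \<in> sets lborel"
    by (auto elim: AE_E)
  have "N \<in> null_sets lborel" using N by auto
  then have "negligible N"
    by (simp add: negligible_iff_null_sets null_sets_completionI)
  moreover have "\<And>x. x \<notin> N \<Longrightarrow> P x" using N by auto
  ultimately show ?thesis using that by blast
qed

lemma difference_quotient_LIMSEQ:
  fixes f :: "real \<Rightarrow> real"
  assumes "(f has_real_derivative D) (at x)"
  shows "(\<lambda>k. (f (x + inverse (real (Suc k))) - f x) / inverse (real (Suc k))) \<longlonglongrightarrow> D"
proof -
  have lim: "((\<lambda>y. (f y - f x) / (y - x)) \<longlongrightarrow> D) (at x)"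
    using assms by (simp add: has_field_derivative_iff)
  have "(\<lambda>k. x + inverse (real (Suc k))) \<longlonglongrightarrow> x + 0"
    by (intro tendsto_intros LIMSEQ_inverse_real_of_nat)
  then have "filterlim (\<lambda>k. x + inverse (real (Suc k))) (at x) sequentially"
    by (intro filterlim_atI) auto
  from filterlim_compose[OF lim this] show ?thesis by simp
qed

lemma has_integral_real_derivative:
  fixes f f' :: "real \<Rightarrow> real"
  assumes "\<alpha> \<le> \<beta>" "\<And>x. x \<in> {\<alpha>..\<beta>} \<Longrightarrow> (f has_real_derivative f' x) (at x within {\<alpha>..\<beta>})"
  shows "(f' has_integral (f \<beta> - f \<alpha>)) {\<alpha>..\<beta>}"
  by (rule fundamental_theorem_of_calculus[OF assms(1)])
     (use assms(2) in \<open>simp add: has_real_derivative_iff_has_vector_derivative\<close>)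

lemma integral_pos_continuous:
  fixes f :: "real \<Rightarrow> real"
  assumes "continuous_on {\<alpha>..\<beta>} f" "\<alpha> < \<beta>" "\<And>x. x \<in> {\<alpha>..\<beta>} \<Longrightarrow> f x \<ge> 0"
    and "x0 \<in> {\<alpha>..\<beta>}" "f x0 > 0"
  shows "integral {\<alpha>..\<beta>} f > 0"
proof -
  have "integral {\<alpha>..\<beta>} f \<ge> 0"
    by (rule integral_nonneg[OF integrable_continuous_interval[OF assms(1)]]) (use assms in auto)
  moreover have "integral {\<alpha>..\<beta>} f \<noteq> 0"
    using integral_eq_0_iff[OF assms(1-3)] assms(4,5) by auto
  ultimately show ?thesis by linarith
qed

lemma continuous_on_interval_abs_boundE:
  fixes f :: "real \<Rightarrow> real"
  assumes "continuous_on {\<alpha>..\<beta>} f"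
  obtains B where "B \<ge> 0" "\<And>x. x \<in> {\<alpha>..\<beta>} \<Longrightarrow> \<bar>f x\<bar> \<le> B"
proof -
  have "bounded (f ` {\<alpha>..\<beta>})"
    by (rule compact_imp_bounded[OF compact_continuous_image[OF assms]]) simp
  then obtain B where B: "\<And>y. y \<in> f ` {\<alpha>..\<beta>} \<Longrightarrow> norm y \<le> B" by (auto simp: bounded_iff)
  show ?thesis
    by (rule that[of "max B 0"]) (use B in force)+
qed

lemma lipschitz_on_clamp_extension:
  fixes F :: "real \<Rightarrow> real"
  assumes "\<alpha> \<le> \<beta>" and lip: "L-lipschitz_on {\<alpha>..\<beta>} F"
  obtains G where "L-lipschitz_on UNIV G" and "\<And>x. x \<in> {\<alpha>..\<beta>} \<Longrightarrow> G x = F x"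
proof -
  define clamp where "clamp x = max \<alpha> (min \<beta> x)" for x :: real
  have clamp_in: "clamp x \<in> {\<alpha>..\<beta>}" for x using assms(1) by (auto simp: clamp_def)
  have L0: "L \<ge> 0" using lip lipschitz_on_nonneg by blast
  have "dist (F (clamp x)) (F (clamp y)) \<le> L * dist x y" for x y
  proof -
    have "dist (F (clamp x)) (F (clamp y)) \<le> L * dist (clamp x) (clamp y)"
      using lipschitz_onD[OF lip clamp_in clamp_in] .
    also have "\<dots> \<le> L * dist x y"
      using L0 by (intro mult_left_mono) (auto simp: clamp_def dist_real_def)
    finally show ?thesis .
  qed
  then have "L-lipschitz_on UNIV (\<lambda>x. F (clamp x))"
    using L0 by (intro lipschitz_onI) auto
  moreover have "F (clamp x) = F x" if "x \<in> {\<alpha>..\<beta>}" for x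
    using that by (simp add: clamp_def)
  ultimately show ?thesis using that by blast
qed

lemma integral_difference_quotient_LIMSEQ:
  fixes f :: "real \<Rightarrow> real"
  assumes "\<alpha> \<le> \<beta>" and f: "continuous_on UNIV f"
  shows "(\<lambda>k. integral {\<alpha>..\<beta>} (\<lambda>x. (f (x + inverse (real (Suc k))) - f x) / inverse (real (Suc k))))
           \<longlonglongrightarrow> f \<beta> - f \<alpha>"
proof -
  define h where "h k = inverse (real (Suc k))" for k
  have h: "0 < h k" "h k \<le> 1" for k by (auto simp: h_def inverse_le_1_iff)
  define G where "G y = integral {\<alpha> - 1..y} f" for y
  have G_deriv: "(G has_real_derivative f y) (at y)" if "\<alpha> - 1 < y" "y < \<beta> + 2" for y
  proof -
    have "(G has_real_derivative f y) (at y within {\<alpha> - 1..\<beta> + 2})"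
      unfolding G_def by (rule integral_has_real_derivative) (use that f continuous_on_subset in auto)
    then show ?thesis using at_within_Icc_at[OF that] by simp
  qed
  have integral_eq: "integral {\<alpha>..\<beta>} (\<lambda>x. (f (x + h k) - f x) / h k)
      = (G (\<beta> + h k) - G \<beta>) / h k - (G (\<alpha> + h k) - G \<alpha>) / h k" for k
  proof -
    have shifted: "((\<lambda>x. f (x + h k)) has_integral G (\<beta> + h k) - G (\<alpha> + h k)) {\<alpha>..\<beta>}"
    proof (rule has_integral_real_derivative[OF assms(1)])
      fix x assume "x \<in> {\<alpha>..\<beta>}"
      then have "(G has_real_derivative f (x + h k)) (at (x + h k))"
        using h[of k] by (intro G_deriv) auto
      then show "((\<lambda>x. G (x + h k)) has_real_derivative f (x + h k)) (at x within {\<alpha>..\<beta>})"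
        by (simp add: DERIV_shift has_field_derivative_at_within)
    qed
    have plain: "(f has_integral G \<beta> - G \<alpha>) {\<alpha>..\<beta>}"
      by (rule has_integral_real_derivative[OF assms(1)])
         (use G_deriv in \<open>auto intro: has_field_derivative_at_within\<close>)
    have "((\<lambda>x. (f (x + h k) - f x) / h k) has_integral
        ((G (\<beta> + h k) - G (\<alpha> + h k)) - (G \<beta> - G \<alpha>)) / h k) {\<alpha>..\<beta>}"
      using has_integral_divide[OF has_integral_diff[OF shifted plain]] by simp
    then show ?thesis by (simp add: integral_unique diff_divide_distrib)
  qed
  have "(\<lambda>k. (G (\<beta> + h k) - G \<beta>) / h k - (G (\<alpha> + h k) - G \<alpha>) / h k) \<longlonglongrightarrow> f \<beta> - f \<alpha>"
    unfolding h_def by (intro tendsto_diff difference_quotient_LIMSEQ G_deriv) (use assms(1) in auto)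
  then show ?thesis unfolding h_def[symmetric] integral_eq .
qed

lemma dominated_convergence_negligible:
  fixes f :: "nat \<Rightarrow> real \<Rightarrow> real"
  assumes f: "\<And>k. f k integrable_on S" and h: "h integrable_on S"
    and le: "\<And>k x. x \<in> S \<Longrightarrow> norm (f k x) \<le> h x"
    and Z: "negligible Z" and conv: "\<And>x. x \<in> S - Z \<Longrightarrow> (\<lambda>k. f k x) \<longlonglongrightarrow> g x"
  shows "g integrable_on S" "(\<lambda>k. integral S (f k)) \<longlonglongrightarrow> integral S g"
proof -
  define fZ where "fZ k x = (if x \<in> Z then 0 else f k x)" for k x
  define gZ where "gZ x = (if x \<in> Z then 0 else g x)" for x
  have fZ_int: "fZ k integrable_on S" for k
    by (rule integrable_spike[OF f Z]) (auto simp: fZ_def)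
  have fZ_le: "norm (fZ k x) \<le> h x" if "x \<in> S" for k x
    using le[OF that, of k] norm_ge_zero[of "f k x"] by (auto simp: fZ_def)
  have fZ_lim: "(\<lambda>k. fZ k x) \<longlonglongrightarrow> gZ x" if "x \<in> S" for x
    using conv[of x] that by (cases "x \<in> Z") (auto simp: fZ_def gZ_def)
  note dominated = dominated_convergence[OF fZ_int h fZ_le fZ_lim]
  show "g integrable_on S"
    by (rule integrable_spike[OF dominated(1) Z]) (auto simp: gZ_def)
  have "integral S (fZ k) = integral S (f k)" for k
    by (rule integral_spike[OF Z]) (auto simp: fZ_def)
  moreover have "integral S gZ = integral S g"
    by (rule integral_spike[OF Z]) (auto simp: gZ_def)
  ultimately show "(\<lambda>k. integral S (f k)) \<longlonglongrightarrow> integral S g"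
    using dominated(2) by simp
qed

text \<open>The difference quotients are dominated by the Lipschitz constant.\<close>
lemma integral_lipschitz_ae_derivative:
  fixes F g :: "real \<Rightarrow> real"
  assumes ab: "\<alpha> \<le> \<beta>" and lip: "L-lipschitz_on {\<alpha>..\<beta>} F" and N: "negligible N"
    and deriv: "\<And>x. x \<in> {\<alpha><..<\<beta>} \<Longrightarrow> x \<notin> N \<Longrightarrow> (F has_real_derivative g x) (at x)"
  shows "g integrable_on {\<alpha>..\<beta>}" "integral {\<alpha>..\<beta>} g = F \<beta> - F \<alpha>"
proof -
  obtain G where G_lip: "L-lipschitz_on UNIV G" and GF: "\<And>x. x \<in> {\<alpha>..\<beta>} \<Longrightarrow> G x = F x"
    using lipschitz_on_clamp_extension[OF ab lip] by blast
  have G_cont: "continuous_on UNIV G" by (rule lipschitz_on_continuous_on[OF G_lip])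
  define h where "h k = inverse (real (Suc k))" for k
  have h: "h k > 0" for k by (simp add: h_def)
  define Q where "Q k x = (G (x + h k) - G x) / h k" for k x
  have Q_int: "Q k integrable_on {\<alpha>..\<beta>}" for k
    unfolding Q_def
    by (intro integrable_continuous_interval continuous_intros continuous_on_compose2[OF G_cont])
       (use h[of k] in auto)
  have Q_bound: "norm (Q k x) \<le> L" for k x
  proof -
    have "\<bar>G (x + h k) - G x\<bar> \<le> L * h k"
      using lipschitz_onD[OF G_lip, of "x + h k" x] h[of k] by (simp add: dist_real_def)
    then show ?thesis using h[of k] by (simp add: Q_def abs_divide divide_le_eq)
  qed
  have Q_lim: "(\<lambda>k. Q k x) \<longlonglongrightarrow> g x" if x: "x \<in> {\<alpha>..\<beta>} - (N \<union> {\<alpha>, \<beta>})" for x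
  proof -
    have x': "x \<in> {\<alpha><..<\<beta>}" "x \<notin> N" using x by auto
    have "(\<lambda>k. h k) \<longlonglongrightarrow> 0" unfolding h_def by (rule LIMSEQ_inverse_real_of_nat)
    then have "\<forall>\<^sub>F k in sequentially. h k < \<beta> - x" using x' by (intro order_tendstoD) auto
    then have "\<forall>\<^sub>F k in sequentially. (F (x + h k) - F x) / h k = Q k x"
    proof (rule eventually_mono)
      fix k assume "h k < \<beta> - x"
      then have "x + h k \<in> {\<alpha>..\<beta>}" using x' h[of k] by auto
      then show "(F (x + h k) - F x) / h k = Q k x" using x' by (simp add: Q_def GF)
    qed
    moreover have "(\<lambda>k. (F (x + h k) - F x) / h k) \<longlonglongrightarrow> g x"
      using difference_quotient_LIMSEQ[OF deriv[OF x']] by (simp add: h_def)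
    ultimately show ?thesis by (simp add: Lim_transform_eventually)
  qed
  have L_int: "(\<lambda>_. L) integrable_on {\<alpha>..\<beta>}" by (rule integrable_continuous_interval) (rule continuous_on_const)
  have Z: "negligible (N \<union> {\<alpha>, \<beta>})" using N by simp
  note dominated = dominated_convergence_negligible[OF Q_int L_int Q_bound Z Q_lim]
  show "g integrable_on {\<alpha>..\<beta>}" by (rule dominated(1))
  have "(\<lambda>k. integral {\<alpha>..\<beta>} (Q k)) \<longlonglongrightarrow> G \<beta> - G \<alpha>"
    using integral_difference_quotient_LIMSEQ[OF ab G_cont] by (simp add: Q_def[abs_def] h_def)
  with dominated(2) have "integral {\<alpha>..\<beta>} g = G \<beta> - G \<alpha>" by (rule LIMSEQ_unique)
  then show "integral {\<alpha>..\<beta>} g = F \<beta> - F \<alpha>" using GF ab by simp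
qed

lemma lipschitz_on_real_derivative_bound:
  fixes f f' :: "real \<Rightarrow> real"
  assumes "\<And>x. x \<in> {\<alpha>..\<beta>} \<Longrightarrow> (f has_real_derivative f' x) (at x within {\<alpha>..\<beta>})"
    and "\<And>x. x \<in> {\<alpha>..\<beta>} \<Longrightarrow> \<bar>f' x\<bar> \<le> B" and "0 \<le> B"
  shows "B-lipschitz_on {\<alpha>..\<beta>} f"
proof (rule bounded_derivative_imp_lipschitz[of _ _ "\<lambda>x h. f' x * h"])
  show "(f has_derivative (\<lambda>h. f' x * h)) (at x within {\<alpha>..\<beta>})" if "x \<in> {\<alpha>..\<beta>}" for x
    using assms(1)[OF that] by (simp add: has_field_derivative_def)
  show "onorm (\<lambda>h. f' x * h) \<le> B" if "x \<in> {\<alpha>..\<beta>}" for x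
    by (rule onorm_le) (use assms(2)[OF that] in \<open>auto simp: abs_mult intro: mult_right_mono\<close>)
qed (use assms in auto)

lemma lipschitz_on_mult_bounded:
  fixes f g :: "real \<Rightarrow> real"
  assumes "A-lipschitz_on S f" "C-lipschitz_on S g"
    and "\<And>x. x \<in> S \<Longrightarrow> \<bar>f x\<bar> \<le> Bf" "\<And>x. x \<in> S \<Longrightarrow> \<bar>g x\<bar> \<le> Bg" "0 \<le> Bf" "0 \<le> Bg"
  shows "(Bf * C + Bg * A)-lipschitz_on S (\<lambda>x. f x * g x)"
proof (rule lipschitz_onI)
  have "A \<ge> 0" "C \<ge> 0" using assms(1,2) lipschitz_on_nonneg by blast+
  then show "0 \<le> Bf * C + Bg * A" using assms by simp
  fix x y assume xy: "x \<in> S" "y \<in> S"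
  have "f x * g x - f y * g y = f x * (g x - g y) + g y * (f x - f y)" by algebra
  then have "\<bar>f x * g x - f y * g y\<bar> \<le> \<bar>f x\<bar> * \<bar>g x - g y\<bar> + \<bar>g y\<bar> * \<bar>f x - f y\<bar>"
    by (metis abs_mult abs_triangle_ineq)
  also have "\<dots> \<le> Bf * (C * \<bar>x - y\<bar>) + Bg * (A * \<bar>x - y\<bar>)"
  proof (intro add_mono mult_mono)
    show "\<bar>g x - g y\<bar> \<le> C * \<bar>x - y\<bar>" using lipschitz_onD[OF assms(2) xy] by (simp add: dist_real_def)
    show "\<bar>f x - f y\<bar> \<le> A * \<bar>x - y\<bar>" using lipschitz_onD[OF assms(1) xy] by (simp add: dist_real_def)
  qed (use assms xy in auto)
  finally show "dist (f x * g x) (f y * g y) \<le> (Bf * C + Bg * A) * dist x y"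
    by (simp add: dist_real_def algebra_simps)
qed

lemma integral_gronwall_eq_0:
  fixes D :: "real \<Rightarrow> real"
  assumes cont: "continuous_on {\<alpha>..\<beta>} D" and K: "K \<ge> 0"
    and le: "\<And>x. x \<in> {\<alpha>..\<beta>} \<Longrightarrow> \<bar>D x\<bar> \<le> K * integral {\<alpha>..x} (\<lambda>y. \<bar>D y\<bar>)"
    and x: "x \<in> {\<alpha>..\<beta>}"
  shows "D x = 0"
proof -
  define E where "E x = integral {\<alpha>..x} (\<lambda>y. \<bar>D y\<bar>)" for x
  have abs_cont: "continuous_on {\<alpha>..\<beta>} (\<lambda>y. \<bar>D y\<bar>)" by (intro continuous_intros cont)
  have E_deriv: "(E has_real_derivative \<bar>D y\<bar>) (at y within {\<alpha>..\<beta>})" if "y \<in> {\<alpha>..\<beta>}" for y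
    unfolding E_def by (rule integral_has_real_derivative[OF abs_cont that])
  have E_nonneg: "E y \<ge> 0" if "y \<in> {\<alpha>..\<beta>}" for y
    unfolding E_def
    by (rule integral_nonneg)
       (use that in \<open>auto intro!: integrable_continuous_interval continuous_on_subset[OF abs_cont]\<close>)
  define H where "H y = exp (- K * y) * E y" for y
  define H' where "H' y = exp (- K * y) * (\<bar>D y\<bar> - K * E y)" for y
  have H_deriv: "(H has_real_derivative H' y) (at y within {\<alpha>..x})" if y: "y \<in> {\<alpha>..x}" for y
  proof -
    have "(E has_real_derivative \<bar>D y\<bar>) (at y within {\<alpha>..x})"
      by (rule DERIV_subset[OF E_deriv]) (use x y in auto)
    then show ?thesis unfolding H_def H'_def
      by (auto intro!: derivative_eq_intros simp: algebra_simps)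
  qed
  have "(H' has_integral (H x - H \<alpha>)) {\<alpha>..x}"
    by (rule has_integral_real_derivative) (use x H_deriv in auto)
  then have "H x - H \<alpha> \<le> 0"
  proof (rule has_integral_le[OF _ has_integral_0])
    fix y assume "y \<in> {\<alpha>..x}"
    then have "\<bar>D y\<bar> - K * E y \<le> 0" using le[of y] x by (auto simp: E_def)
    then show "H' y \<le> 0" unfolding H'_def by (simp add: mult_nonneg_nonpos)
  qed
  moreover have "H \<alpha> = 0" by (simp add: H_def E_def)
  moreover have "H x \<ge> 0" using E_nonneg[OF x] by (simp add: H_def)
  ultimately have "E x = 0" by (simp add: H_def)
  then show ?thesis using le[OF x] by (simp add: E_def)
qed

lemma integral_volterra_eq_0:
  fixes D k :: "real \<Rightarrow> real"
  assumes cont: "continuous_on {\<alpha>..\<beta>} D" and K: "\<And>y. \<bar>k y\<bar> \<le> K"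
    and int: "\<And>x. x \<in> {\<alpha>..\<beta>} \<Longrightarrow> (\<lambda>y. k y * D y) integrable_on {\<alpha>..x}"
    and eq: "\<And>x. x \<in> {\<alpha>..\<beta>} \<Longrightarrow> D x = integral {\<alpha>..x} (\<lambda>y. k y * D y)"
    and x: "x \<in> {\<alpha>..\<beta>}"
  shows "D x = 0"
proof (rule integral_gronwall_eq_0[OF cont _ _ x])
  show "0 \<le> K" using K[of 0] by linarith
  fix y assume y: "y \<in> {\<alpha>..\<beta>}"
  have bound_int: "(\<lambda>y. K * \<bar>D y\<bar>) integrable_on {\<alpha>..y}"
    by (rule integrable_continuous_interval) (use y in \<open>intro continuous_intros continuous_on_subset[OF cont]; auto\<close>)
  have "\<bar>D y\<bar> = norm (integral {\<alpha>..y} (\<lambda>y. k y * D y))" using eq[OF y] by simp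
  also have "\<dots> \<le> integral {\<alpha>..y} (\<lambda>y. K * \<bar>D y\<bar>)"
    by (rule integral_norm_bound_integral[OF int[OF y] bound_int])
       (simp add: abs_mult mult_right_mono K)
  finally show "\<bar>D y\<bar> \<le> K * integral {\<alpha>..y} (\<lambda>y. \<bar>D y\<bar>)" by simp
qed

lemma picone_identity:
  fixes X Y u w winv c1 lam :: real
  assumes "u > 0" "w > 0" "w * winv = 1"
  shows "(((2 * X * c1) * Y + (- lam * w * u) * X^2) * u - X^2 * Y * (Y * winv)) / (u * u)
         = c1^2 * w - lam * (w * X^2) - w * (c1 - X * Y * winv / u)^2"
proof -
  have winv: "winv = 1 / w" using assms by (simp add: field_simps)
  show ?thesis using assms unfolding winv by (simp add: field_simps power2_eq_square)
qed

lemma integral_power_over_fact: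
  fixes c x C :: real
  assumes "c \<le> x"
  shows "integral {c..x} (\<lambda>t. C * (t - c)^k / fact k) = C * (x - c)^(Suc k) / fact (Suc k)"
proof -
  have "((\<lambda>t. C * (t - c)^k / fact k) has_integral
        (C * (x - c)^(Suc k) / fact (Suc k) - C * (c - c)^(Suc k) / fact (Suc k))) {c..x}"
  proof (rule has_integral_real_derivative[OF assms])
    fix t assume "t \<in> {c..x}"
    have "((\<lambda>t. t - c) has_real_derivative 1) (at t within {c..x})"
      by (auto intro!: derivative_eq_intros)
    from DERIV_power[OF this, of "Suc k"]
    have "((\<lambda>t. (t - c)^(Suc k)) has_real_derivative real (Suc k) * (t - c)^k) (at t within {c..x})"
      by simp
    from DERIV_cdivide[OF DERIV_cmult[OF this, of C], of "fact (Suc k)"]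
    show "((\<lambda>t. C * (t - c)^(Suc k) / fact (Suc k)) has_real_derivative C * (t - c)^k / fact k) (at t within {c..x})"
      by (rule DERIV_cong) (simp add: fact_Suc)
  qed
  then have "integral {c..x} (\<lambda>t. C * (t - c)^k / fact k) =
      C * (x - c)^(Suc k) / fact (Suc k) - C * (c - c)^(Suc k) / fact (Suc k)"
    by (rule integral_unique)
  then show ?thesis by simp
qed

lemma tendsto_log_inverse_exp_rate:
  fixes lam :: "real \<Rightarrow> real" and b0 :: real
  assumes "\<And>e. e > 0 \<Longrightarrow> \<exists>c K. c > 0 \<and> K > 0 \<and> (\<forall>p>0.
              K * exp (- p * b0) \<le> lam p \<and> lam p \<le> exp (- p * (b0 - e)) / c)"
  shows "((\<lambda>p. (1 / p) * ln (1 / lam p)) \<longlongrightarrow> b0) at_top"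
proof (rule tendstoI)
  fix e :: real assume e: "e > 0"
  obtain c K where cK: "c > 0" "K > 0"
    and bounds: "\<And>p. p > 0 \<Longrightarrow> K * exp (- p * b0) \<le> lam p \<and> lam p \<le> exp (- p * (b0 - e / 2)) / c"
    using assms[of "e / 2"] e by auto
  have vanish: "((\<lambda>p. C / p) \<longlongrightarrow> 0) at_top" for C :: real
    by (intro tendsto_divide_0[OF tendsto_const] filterlim_at_top_imp_at_infinity filterlim_ident)
  have "\<forall>\<^sub>F p in at_top. \<bar>ln K\<bar> / p < e" by (rule order_tendstoD(2)[OF vanish e])
  moreover have "\<forall>\<^sub>F p in at_top. \<bar>ln c\<bar> / p < e / 2" by (rule order_tendstoD(2)[OF vanish]) (use e in simp)
  moreover have "\<forall>\<^sub>F p in at_top. p > (0::real)" by (rule eventually_gt_at_top)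
  ultimately show "\<forall>\<^sub>F p in at_top. dist ((1 / p) * ln (1 / lam p)) b0 < e"
  proof eventually_elim
    case (elim p)
    then have small: "\<bar>ln K\<bar> / p < e" "\<bar>ln c\<bar> / p < e / 2" and p: "p > 0" by auto
    have lower: "K * exp (- p * b0) \<le> lam p" and upper: "lam p \<le> exp (- p * (b0 - e / 2)) / c"
      using bounds[OF p] by auto
    have lam_pos: "lam p > 0" using lower cK by (smt (verit) exp_gt_zero mult_pos_pos)
    have "ln K - p * b0 \<le> ln (lam p)" using lower lam_pos cK by (simp add: ln_mult flip: ln_le_cancel_iff)
    moreover have "ln (lam p) \<le> - p * (b0 - e / 2) - ln c"
      using upper lam_pos cK by (simp add: ln_div flip: ln_le_cancel_iff)
    moreover have "\<bar>ln K\<bar> < p * e" "\<bar>ln c\<bar> < p * e / 2" using small p by (simp_all add: field_simps)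
    ultimately have "\<bar>- ln (lam p) - p * b0\<bar> < p * e" by (simp add: abs_less_iff algebra_simps)
    then show "dist ((1 / p) * ln (1 / lam p)) b0 < e"
      using p lam_pos by (simp add: dist_real_def ln_div abs_less_iff field_simps)
  qed
qed

lemma lipschitz_even_if_ae_derivative_odd:
  fixes a b :: "real \<Rightarrow> real"
  assumes lip: "L-lipschitz_on {-l..l} b" and N: "negligible N"
    and deriv: "\<And>x. x \<in> {-l<..<l} \<Longrightarrow> x \<notin> N \<Longrightarrow> (b has_real_derivative a x) (at x)"
    and odd: "\<And>x. x \<in> {-l<..<l} \<Longrightarrow> x \<notin> N \<Longrightarrow> a (- x) = - a x"
  shows "x \<in> {-l..l} \<Longrightarrow> b (- x) = b x"
proof -
  have even_nonneg: "b (- x) = b x" if x: "x \<in> {0..l}" for x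
  proof -
    define F where "F y = b y - b (- y)" for y
    have "L-lipschitz_on {0..x} b" by (rule lipschitz_on_subset[OF lip]) (use x in auto)
    moreover have "(L * 1)-lipschitz_on {0..x} (\<lambda>y. b (- y))"
    proof (rule lipschitz_on_compose2[of 1 _ "\<lambda>y. - y"])
      show "1-lipschitz_on {0..x} (\<lambda>y. - y)"
        using lipschitz_on_id[of "{0..x}"] by (simp add: lipschitz_on_minus_iff)
      show "L-lipschitz_on ((\<lambda>y. - y) ` {0..x}) b" by (rule lipschitz_on_subset[OF lip]) (use x in auto)
    qed
    ultimately have F_lip: "(L + L * 1)-lipschitz_on {0..x} F" unfolding F_def by (rule lipschitz_on_diff)
    have "negligible (uminus ` N)"
      by (rule negligible_differentiable_image_negligible[OF order_refl N])
         (auto simp: differentiable_on_def differentiable_def intro: has_derivative_minus[OF has_derivative_ident])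
    then have N': "negligible (N \<union> uminus ` N)" using N by simp
    have "(F has_real_derivative 0) (at y)" if y: "y \<in> {0<..<x}" "y \<notin> N \<union> uminus ` N" for y
    proof -
      have y1: "y \<in> {-l<..<l}" "y \<notin> N" and y2: "- y \<in> {-l<..<l}" "- y \<notin> N"
        using y x by (auto simp: image_iff)
      have "((\<lambda>y. - y) has_real_derivative -1) (at y)" by (auto intro!: derivative_eq_intros)
      then have "((\<lambda>y. b (- y)) has_real_derivative a (- y) * (- 1)) (at y)"
        using DERIV_chain2[of b "a (- y)" "\<lambda>y. - y" y "-1" UNIV] deriv[OF y2] by simp
      from DERIV_diff[OF deriv[OF y1] this] show ?thesis
        unfolding F_def by (rule DERIV_cong) (simp add: odd[OF y1])
    qed
    then have "integral {0..x} (\<lambda>_. 0) = F x - F 0"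
      by (intro integral_lipschitz_ae_derivative(2)[OF _ F_lip N']) (use x in auto)
    then show ?thesis by (simp add: F_def)
  qed
  show "x \<in> {-l..l} \<Longrightarrow> b (- x) = b x"
    using even_nonneg[of x] even_nonneg[of "- x"] by (cases "x \<ge> 0") auto
qed

lemma separated_extremal_pointsE:
  fixes b :: "real \<Rightarrow> real"
  assumes cont: "continuous_on {0..l} b" and "0 \<le> l"
    and separated: "Sup {x\<in>{0..l}. b x = (INF y\<in>{0..l}. b y)} < Inf {x\<in>{0..l}. b x = (SUP y\<in>{0..l}. b y)}"
  obtains x1 x2 where "0 \<le> x1" "x1 < x2" "x2 \<le> l"
    "\<And>x. x \<in> {0..l} \<Longrightarrow> b x1 \<le> b x" "\<And>x. x \<in> {0..l} \<Longrightarrow> b x \<le> b x2"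
proof -
  define b1 where "b1 = (INF y\<in>{0..l}. b y)"
  define b2 where "b2 = (SUP y\<in>{0..l}. b y)"
  have compact: "compact (b ` {0..l})" by (rule compact_continuous_image[OF cont]) simp
  have bdd: "bdd_below (b ` {0..l})" "bdd_above (b ` {0..l})"
    using compact_imp_bounded[OF compact] by (auto intro: bounded_imp_bdd_below bounded_imp_bdd_above)
  have ne: "b ` {0..l} \<noteq> {}" using assms(2) by auto
  have b12: "b1 \<le> b x" "b x \<le> b2" if "x \<in> {0..l}" for x
    unfolding b1_def b2_def using bdd that by (auto intro: cInf_lower cSup_upper)
  define B1 where "B1 = {x\<in>{0..l}. b x = b1}"
  define B2 where "B2 = {x\<in>{0..l}. b x = b2}"
  have "B1 = {x\<in>{0..l}. b x \<le> b1}" "B2 = {x\<in>{0..l}. b2 \<le> b x}"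
    using b12 by (auto simp: B1_def B2_def order.eq_iff)
  then have closed: "closed B1" "closed B2"
    using continuous_on_closed_Collect_le[OF cont continuous_on_const, of b1]
      continuous_on_closed_Collect_le[OF continuous_on_const cont, of b2] by simp_all
  have "b1 \<in> b ` {0..l}" unfolding b1_def
    by (rule closed_contains_Inf[OF ne bdd(1) compact_imp_closed[OF compact]])
  then have B1_ne: "B1 \<noteq> {}" by (auto simp: B1_def)
  have "b2 \<in> b ` {0..l}" unfolding b2_def
    by (rule closed_contains_Sup[OF ne bdd(2) compact_imp_closed[OF compact]])
  then have B2_ne: "B2 \<noteq> {}" by (auto simp: B2_def)
  have "Sup B1 \<in> B1"
    by (rule closed_contains_Sup[OF B1_ne _ closed(1)]) (auto simp: B1_def intro: bdd_aboveI)
  moreover have "Inf B2 \<in> B2"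
    by (rule closed_contains_Inf[OF B2_ne _ closed(2)]) (auto simp: B2_def intro: bdd_belowI)
  moreover have "Sup B1 < Inf B2" using separated unfolding B1_def B2_def b1_def b2_def .
  ultimately show ?thesis using that[of "Sup B1" "Inf B2"] b12 by (auto simp: B1_def B2_def)
qed

lemma separated_level_windowE:
  fixes b :: "real \<Rightarrow> real"
  assumes cont: "continuous_on {-l..l} b" and x12: "0 \<le> x1" "x1 < x2" "x2 \<le> l" and e: "0 < e"
  obtains s t \<delta> where "0 < s" "s < t" "t < l" "0 < \<delta>" "{x1 - \<delta>..x1 + \<delta>} \<subseteq> {-s..s}"
    "\<And>x. x \<in> {s..t} \<Longrightarrow> b x2 - e \<le> b x" "\<And>x. x \<in> {x1 - \<delta>..x1 + \<delta>} \<Longrightarrow> b x \<le> b x1 + e"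
proof -
  have near: "\<exists>\<eta>>0. \<forall>y\<in>{-l..l}. \<bar>y - x\<bar> < \<eta> \<longrightarrow> \<bar>b y - b x\<bar> < e" if "x \<in> {-l..l}" for x
    using cont that e unfolding continuous_on_iff dist_real_def by blast
  obtain \<eta>2 where \<eta>2: "\<eta>2 > 0" "\<And>y. y \<in> {-l..l} \<Longrightarrow> \<bar>y - x2\<bar> < \<eta>2 \<Longrightarrow> \<bar>b y - b x2\<bar> < e"
    using near[of x2] x12 by auto
  obtain \<eta>1 where \<eta>1: "\<eta>1 > 0" "\<And>y. y \<in> {-l..l} \<Longrightarrow> \<bar>y - x1\<bar> < \<eta>1 \<Longrightarrow> \<bar>b y - b x1\<bar> < e"
    using near[of x1] x12 by auto
  define m where "m = max x1 (x2 - \<eta>2)"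
  define s where "s = m + (x2 - m) / 3"
  define t where "t = m + 2 * (x2 - m) / 3"
  define \<delta> where "\<delta> = min (\<eta>1 / 2) (s - x1)"
  have m: "x1 \<le> m" "x2 - \<eta>2 \<le> m" "m < x2" using x12 \<eta>2 by (auto simp: m_def)
  have st: "0 < s" "s < t" "t < l" "m < s" "t < x2"
    using m x12 unfolding s_def t_def by (simp_all add: field_simps; linarith)+
  have \<delta>: "0 < \<delta>" "\<delta> \<le> s - x1" "\<delta> < \<eta>1" using \<eta>1 st m by (auto simp: \<delta>_def)
  show ?thesis
  proof (rule that[OF st(1-3) \<delta>(1)])
    show "{x1 - \<delta>..x1 + \<delta>} \<subseteq> {-s..s}" using \<delta> x12 by auto
    show "b x2 - e \<le> b x" if "x \<in> {s..t}" for x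
      using \<eta>2(2)[of x] that st m by (auto simp: abs_less_iff)
    show "b x \<le> b x1 + e" if "x \<in> {x1 - \<delta>..x1 + \<delta>}" for x
      using \<eta>1(2)[of x] that \<delta> st x12 by (auto simp: abs_less_iff)
  qed
qed

lemma positive_eigenpairE:
  assumes "positive_eigenpair a l p lam u"
  obtains u' u'' N' where
    "\<And>x. x \<in> {-l..l} \<Longrightarrow> (u has_real_derivative u' x) (at x within {-l..l})"
    "u'' integrable_on {-l..l}" "\<And>x. x \<in> {-l..l} \<Longrightarrow> u' x = u' (-l) + integral {-l..x} u''"
    "negligible N'" "\<And>x. x \<in> {-l<..<l} \<Longrightarrow> x \<notin> N' \<Longrightarrow> - u'' x + p * a x * u' x = lam * u x"
proof -
  from assms obtain u' u'' where
    deriv: "\<forall>x\<in>{-l..l}. (u has_real_derivative u' x) (at x within {-l..l})"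
    and abs_int: "u'' absolutely_integrable_on {-l..l}"
    and prim: "\<forall>x\<in>{-l..l}. u' x = u' (-l) + integral {-l..x} u''"
    and eqn: "AE x in lborel. x \<in> {-l<..<l} \<longrightarrow> - u'' x + p * a x * u' x = lam * u x"
    unfolding positive_eigenpair_def by blast
  obtain N' where "negligible N'"
    "\<And>x. x \<notin> N' \<Longrightarrow> x \<in> {-l<..<l} \<longrightarrow> - u'' x + p * a x * u' x = lam * u x"
    using AE_lborel_negligibleE[OF eqn] by blast
  moreover have "u'' integrable_on {-l..l}" using abs_int by (simp add: absolutely_integrable_on_def)
  ultimately show ?thesis using that[of u' u'' N'] deriv prim by blast
qed

lemma principal_eigenvalue_cong_AE:
  assumes "AE x in lborel. x \<in> {-l<..<l} \<longrightarrow> a x = a' x"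
  shows "principal_eigenvalue a l p = principal_eigenvalue a' l p"
proof -
  have "(AE x in lborel. x \<in> {-l<..<l} \<longrightarrow> - u'' x + p * a x * u' x = lam * u x) \<longleftrightarrow>
        (AE x in lborel. x \<in> {-l<..<l} \<longrightarrow> - u'' x + p * a' x * u' x = lam * u x)" for u'' u' u lam
  proof
    assume "AE x in lborel. x \<in> {-l<..<l} \<longrightarrow> - u'' x + p * a x * u' x = lam * u x"
    with assms show "AE x in lborel. x \<in> {-l<..<l} \<longrightarrow> - u'' x + p * a' x * u' x = lam * u x"
      by eventually_elim auto
  next
    assume "AE x in lborel. x \<in> {-l<..<l} \<longrightarrow> - u'' x + p * a' x * u' x = lam * u x"
    with assms show "AE x in lborel. x \<in> {-l<..<l} \<longrightarrow> - u'' x + p * a x * u' x = lam * u x"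
      by eventually_elim auto
  qed
  then show ?thesis unfolding principal_eigenvalue_def positive_eigenpair_def by simp
qed

section \<open>The eigenvalue problem in divergence form\<close>

locale drift_eigenproblem =
  fixes a b :: "real \<Rightarrow> real" and l p M L :: real and N :: "real set"
  assumes l_pos: "0 < l" and p_pos: "0 < p"
    and N_negligible: "negligible N"
    and a_bounded: "\<And>x. \<bar>a x\<bar> \<le> M"
    and b_deriv: "\<And>x. x \<in> {-l<..<l} \<Longrightarrow> x \<notin> N \<Longrightarrow> (b has_real_derivative a x) (at x)"
    and b_lipschitz: "L-lipschitz_on {-l..l} b"
begin

definition w where "w x = exp (- p * b x)"
definition winv where "winv x = exp (p * b x)"
definition bmin where "bmin = Inf (b ` {-l..l})"
definition bmax where "bmax = Sup (b ` {-l..l})"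
definition w_max where "w_max = exp (- p * bmin)"
definition winv_max where "winv_max = exp (p * bmax)"

lemma b_continuous: "continuous_on {-l..l} b"
  using b_lipschitz by (rule lipschitz_on_continuous_on)

lemma b_bounds: "x \<in> {-l..l} \<Longrightarrow> bmin \<le> b x \<and> b x \<le> bmax"
proof -
  assume x: "x \<in> {-l..l}"
  have "bounded (b ` {-l..l})"
    by (rule compact_imp_bounded[OF compact_continuous_image[OF b_continuous]]) simp
  then show ?thesis unfolding bmin_def bmax_def
    using x by (auto intro!: cInf_lower cSup_upper bounded_imp_bdd_below bounded_imp_bdd_above)
qed

lemma w_pos: "w x > 0" by (simp add: w_def)
lemma winv_pos: "winv x > 0" by (simp add: winv_def)
lemma w_winv: "w x * winv x = 1" by (simp add: w_def winv_def exp_add[symmetric])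
lemma w_le: "x \<in> {-l..l} \<Longrightarrow> w x \<le> w_max"
  using b_bounds[of x] p_pos by (simp add: w_def w_max_def)
lemma winv_le: "x \<in> {-l..l} \<Longrightarrow> winv x \<le> winv_max"
  using b_bounds[of x] p_pos by (simp add: winv_def winv_max_def)
lemma w_max_pos: "w_max > 0" by (simp add: w_max_def)
lemma winv_max_pos: "winv_max > 0" by (simp add: winv_max_def)

lemma w_continuous: "continuous_on {-l..l} w"
  unfolding w_def by (intro continuous_intros b_continuous)
lemma winv_continuous: "continuous_on {-l..l} winv"
  unfolding winv_def by (intro continuous_intros b_continuous)

lemma winv_deriv:
  "x \<in> {-l<..<l} \<Longrightarrow> x \<notin> N \<Longrightarrow> (winv has_real_derivative p * a x * winv x) (at x)"
  unfolding winv_def by (auto intro!: derivative_eq_intros b_deriv)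

lemma winv_lipschitz: "(winv_max * (p * L))-lipschitz_on {-l..l} winv"
proof -
  have pb: "(p * L)-lipschitz_on {-l..l} (\<lambda>x. p * b x)"
    using lipschitz_on_cmult_real_nonneg[OF b_lipschitz, of p] p_pos by simp
  have "winv_max-lipschitz_on ((\<lambda>x. p * b x) ` {-l..l}) exp"
  proof (rule lipschitz_on_subset)
    show "winv_max-lipschitz_on {p * bmin..p * bmax} exp"
      by (rule lipschitz_on_real_derivative_bound[of _ _ exp exp])
         (auto intro!: derivative_eq_intros simp: winv_max_def)
    show "(\<lambda>x. p * b x) ` {-l..l} \<subseteq> {p * bmin..p * bmax}"
      using b_bounds p_pos by auto
  qed
  from lipschitz_on_compose2[OF pb this] show ?thesis by (simp add: winv_def)
qed

text \<open>Since \<open>w' = -p a w\<close>, the equation \<open>-u'' + p a u' = \<lambda> u\<close> is \<open>(w u')' = -\<lambda> w u\<close>; the second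
  component \<open>V\<close> is the flux \<open>w u'\<close>.\<close>
definition div_form_solution where
  "div_form_solution lam u V \<longleftrightarrow> (\<forall>x\<in>{-l..l}.
      (u has_real_derivative V x * winv x) (at x within {-l..l}) \<and>
      (V has_real_derivative - lam * w x * u x) (at x within {-l..l}))"

lemma div_form_solutionD:
  assumes "div_form_solution lam u V" "x \<in> {-l..l}"
  shows "(u has_real_derivative V x * winv x) (at x within {-l..l})"
    "(V has_real_derivative - lam * w x * u x) (at x within {-l..l})"
  using assms unfolding div_form_solution_def by auto

lemma div_form_solution_continuous:
  assumes "div_form_solution lam u V"
  shows "continuous_on {-l..l} u" "continuous_on {-l..l} V"
  using assms unfolding div_form_solution_def
  by (auto simp: continuous_on_eq_continuous_within intro: DERIV_continuous)

lemma div_form_solution_deriv_at: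
  assumes "div_form_solution lam u V" "x \<in> {-l<..<l}"
  shows "(u has_real_derivative V x * winv x) (at x)"
    "(V has_real_derivative - lam * w x * u x) (at x)"
  using div_form_solutionD[OF assms(1), of x] at_within_Icc_at[of "-l" x l] assms(2) by auto

text \<open>The weighted Wronskian \<open>V\<^sub>1 u\<^sub>2 - u\<^sub>1 V\<^sub>2\<close> has derivative \<open>(\<mu> - \<lambda>) w u\<^sub>1 u\<^sub>2\<close>.\<close>
lemma positive_eigenvalue_unique:
  assumes s1: "div_form_solution lam u1 V1" and s2: "div_form_solution mu u2 V2"
    and bc: "u1 (-l) = 0" "u1 l = 0" "u2 (-l) = 0" "u2 l = 0"
    and pos: "\<forall>x\<in>{-l<..<l}. u1 x > 0" "\<forall>x\<in>{-l<..<l}. u2 x > 0"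
  shows "lam = mu"
proof -
  let ?W = "\<lambda>x. V1 x * u2 x - u1 x * V2 x"
  have deriv: "(?W has_real_derivative (mu - lam) * (w x * u1 x * u2 x)) (at x within {-l..l})"
    if x: "x \<in> {-l..l}" for x
    by (rule DERIV_cong[OF DERIV_diff[OF
          DERIV_mult[OF div_form_solutionD(2)[OF s1 x] div_form_solutionD(1)[OF s2 x]]
          DERIV_mult[OF div_form_solutionD(1)[OF s1 x] div_form_solutionD(2)[OF s2 x]]]])
       (simp add: algebra_simps)
  have "((\<lambda>x. (mu - lam) * (w x * u1 x * u2 x)) has_integral ?W l - ?W (-l)) {-l..l}"
    by (rule has_integral_real_derivative) (use l_pos deriv in auto)
  then have "((\<lambda>x. (mu - lam) * (w x * u1 x * u2 x)) has_integral 0) {-l..l}"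
    using bc by simp
  then have "integral {-l..l} (\<lambda>x. (mu - lam) * (w x * u1 x * u2 x)) = 0"
    by (rule integral_unique)
  then have eq: "(mu - lam) * integral {-l..l} (\<lambda>x. w x * u1 x * u2 x) = 0"
    by (simp only: integral_mult_right)
  have "integral {-l..l} (\<lambda>x. w x * u1 x * u2 x) > 0"
  proof (rule integral_pos_continuous[of _ _ _ 0])
    show "continuous_on {-l..l} (\<lambda>x. w x * u1 x * u2 x)"
      using div_form_solution_continuous[OF s1] div_form_solution_continuous[OF s2] w_continuous
      by (intro continuous_intros) auto
    show "0 \<le> w x * u1 x * u2 x" if "x \<in> {-l..l}" for x
    proof (cases "x = -l \<or> x = l")
      case True then show ?thesis using bc by auto
    next
      case False then show ?thesis using that pos w_pos[of x] by (auto intro!: mult_nonneg_nonneg less_imp_le)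
    qed
  qed (use pos l_pos w_pos in auto)
  then show ?thesis using eq by simp
qed

definition w_primitive where "w_primitive x = integral {-l..x} w"

lemma w_primitive_deriv:
  "x \<in> {-l..l} \<Longrightarrow> (w_primitive has_real_derivative w x) (at x within {-l..l})"
  unfolding w_primitive_def by (rule integral_has_real_derivative[OF w_continuous])

lemma w_primitive_continuous: "continuous_on {-l..l} w_primitive"
  unfolding continuous_on_eq_continuous_within using w_primitive_deriv DERIV_continuous by blast

lemma w_integrable: "{c..d} \<subseteq> {-l..l} \<Longrightarrow> w integrable_on {c..d}"
  by (rule integrable_continuous_interval, erule continuous_on_subset[OF w_continuous])

lemma w_primitive_bounds:
  assumes x: "x \<in> {-l..l}"
  shows "0 \<le> w_primitive x" "w_primitive x \<le> w_primitive l" "w_primitive l \<le> w_max * (2 * l)"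
proof -
  have nonneg: "integral {c..d} w \<ge> 0" if "{c..d} \<subseteq> {-l..l}" for c d
    by (rule integral_nonneg[OF w_integrable[OF that]]) (simp add: w_pos less_imp_le)
  have "integral {-l..x} w + integral {x..l} w = integral {-l..l} w"
    by (rule Henstock_Kurzweil_Integration.integral_combine) (use x w_integrable[of "-l" l] in auto)
  moreover have "integral {-l..x} w \<ge> 0" "integral {x..l} w \<ge> 0" by (rule nonneg, use x in auto)+
  ultimately show "0 \<le> w_primitive x" "w_primitive x \<le> w_primitive l"
    unfolding w_primitive_def by linarith+
  have "norm (integral {-l..l} w) \<le> w_max * (l - - l)"
    by (rule integral_bound) (use l_pos w_continuous w_le w_pos in \<open>auto simp: abs_of_pos\<close>)
  then show "w_primitive l \<le> w_max * (2 * l)" by (simp add: w_primitive_def)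
qed

lemma torsion_constantE:
  obtains C where "0 \<le> C" "C \<le> w_primitive l"
    "integral {-l..l} (\<lambda>s. winv s * (C - w_primitive s)) = 0"
proof -
  define P where "P = integral {-l..l} winv"
  define Q where "Q = integral {-l..l} (\<lambda>s. winv s * w_primitive s)"
  have P_pos: "P > 0" unfolding P_def
    by (rule integral_pos_continuous[of _ _ _ 0]) (use l_pos winv_continuous winv_pos in \<open>auto intro: less_imp_le\<close>)
  have int_winv: "(\<lambda>s. Q / P * winv s) integrable_on {-l..l}"
    by (intro integrable_continuous_interval continuous_intros winv_continuous)
  have int_winv_Wp: "(\<lambda>s. winv s * w_primitive s) integrable_on {-l..l}"
    by (intro integrable_continuous_interval continuous_intros winv_continuous w_primitive_continuous)
  have Q_nonneg: "0 \<le> Q" unfolding Q_def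
    by (rule integral_nonneg[OF int_winv_Wp]) (metis mult_nonneg_nonneg less_imp_le winv_pos w_primitive_bounds(1))
  have "Q \<le> integral {-l..l} (\<lambda>s. winv s * w_primitive l)" unfolding Q_def
  proof (rule integral_le[OF int_winv_Wp])
    show "(\<lambda>s. winv s * w_primitive l) integrable_on {-l..l}"
      by (intro integrable_continuous_interval continuous_intros winv_continuous)
    show "winv x * w_primitive x \<le> winv x * w_primitive l" if "x \<in> {-l..l}" for x
      using w_primitive_bounds[OF that] winv_pos[of x] by (simp add: mult_left_mono less_imp_le)
  qed
  then have "Q \<le> P * w_primitive l" by (simp add: P_def)
  then have bounds: "0 \<le> Q / P" "Q / P \<le> w_primitive l" using Q_nonneg P_pos by (auto simp: field_simps)
  have "(\<lambda>s. winv s * (Q / P - w_primitive s)) = (\<lambda>s. Q / P * winv s - winv s * w_primitive s)"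
    by (auto simp: algebra_simps)
  then have "integral {-l..l} (\<lambda>s. winv s * (Q / P - w_primitive s))
      = integral {-l..l} (\<lambda>s. Q / P * winv s) - integral {-l..l} (\<lambda>s. winv s * w_primitive s)"
    using integral_diff[OF int_winv int_winv_Wp] by simp
  also have "\<dots> = Q / P * P - Q" by (simp add: P_def Q_def)
  finally show ?thesis using that[OF bounds] P_pos by simp
qed

text \<open>The torsion function: \<open>(w T')' = -w\<close> with \<open>T(\<plusminus>l) = 0\<close>, written as the pair \<open>(T, W)\<close>
  with \<open>W = w T'\<close>.\<close>
lemma torsion_functionE:
  obtains T W where
    "\<And>x. x \<in> {-l..l} \<Longrightarrow> (T has_real_derivative winv x * W x) (at x within {-l..l})"
    "\<And>x. x \<in> {-l..l} \<Longrightarrow> (W has_real_derivative - w x) (at x within {-l..l})"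
    "T (-l) = 0" "T l = 0" "\<And>x. x \<in> {-l..l} \<Longrightarrow> \<bar>T x\<bar> \<le> 4 * l^2 * winv_max * w_max"
proof -
  obtain C where C: "0 \<le> C" "C \<le> w_primitive l" "integral {-l..l} (\<lambda>s. winv s * (C - w_primitive s)) = 0"
    by (rule torsion_constantE)
  define W where "W x = C - w_primitive x" for x
  define T where "T x = integral {-l..x} (\<lambda>s. winv s * W s)" for x
  have W_bound: "\<bar>W x\<bar> \<le> w_max * (2 * l)" if "x \<in> {-l..l}" for x
    using w_primitive_bounds[OF that] C unfolding W_def by linarith
  have integrand_cont: "continuous_on {-l..l} (\<lambda>s. winv s * W s)"
    unfolding W_def by (intro continuous_intros winv_continuous w_primitive_continuous)
  show ?thesis
  proof
    show "(T has_real_derivative winv x * W x) (at x within {-l..l})" if "x \<in> {-l..l}" for x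
      unfolding T_def by (rule integral_has_real_derivative[OF integrand_cont that])
    show "(W has_real_derivative - w x) (at x within {-l..l})" if "x \<in> {-l..l}" for x
      unfolding W_def by (rule DERIV_cong[OF DERIV_diff[OF DERIV_const w_primitive_deriv[OF that]]]) simp
    show "T (-l) = 0" by (simp add: T_def)
    show "T l = 0" using C(3) by (simp add: T_def W_def)
    show "\<bar>T x\<bar> \<le> 4 * l^2 * winv_max * w_max" if x: "x \<in> {-l..l}" for x
    proof -
      have "norm (T x) \<le> (winv_max * (w_max * (2 * l))) * (x - - l)"
        unfolding T_def
      proof (rule integral_bound)
        show "continuous_on {-l..x} (\<lambda>s. winv s * W s)"
          by (rule continuous_on_subset[OF integrand_cont]) (use x in auto)
        fix t assume "t \<in> {-l..x}"
        then have t: "t \<in> {-l..l}" using x by auto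
        show "norm (winv t * W t) \<le> winv_max * (w_max * (2 * l))"
          unfolding real_norm_def abs_mult
          by (rule mult_mono) (use winv_le[OF t] W_bound[OF t] winv_pos[of t] in auto)
      qed (use x in auto)
      also have "\<dots> \<le> (winv_max * (w_max * (2 * l))) * (2 * l)"
        by (rule mult_left_mono) (use x l_pos winv_max_pos w_max_pos in auto)
      finally show ?thesis by (simp add: power2_eq_square algebra_simps)
    qed
  qed
qed

text \<open>With the torsion pair \<open>(T, W)\<close>, \<open>(V T - u W)' = w u (1 - \<lambda> T)\<close>; integrating gives
  \<open>\<integral> w u (1 - \<lambda> T) = 0\<close>, impossible if \<open>\<lambda> \<parallel>T\<parallel>\<^sub>\<infinity> < 1\<close>.\<close>
lemma positive_eigenvalue_lower_bound:
  assumes s: "div_form_solution lam u V" and bc: "u (-l) = 0" "u l = 0"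
    and pos: "\<forall>x\<in>{-l<..<l}. u x > 0" and lam0: "lam \<ge> 0"
  shows "lam \<ge> 1 / (4 * l^2 * winv_max * w_max)"
proof (rule ccontr)
  assume "\<not> ?thesis"
  then have small: "lam * (4 * l^2 * winv_max * w_max) < 1"
    using l_pos winv_max_pos w_max_pos by (simp add: field_simps)
  obtain T W where T_deriv: "\<And>x. x \<in> {-l..l} \<Longrightarrow> (T has_real_derivative winv x * W x) (at x within {-l..l})"
    and W_deriv: "\<And>x. x \<in> {-l..l} \<Longrightarrow> (W has_real_derivative - w x) (at x within {-l..l})"
    and T_bc: "T (-l) = 0" "T l = 0" and T_bound: "\<And>x. x \<in> {-l..l} \<Longrightarrow> \<bar>T x\<bar> \<le> 4 * l^2 * winv_max * w_max"
    by (rule torsion_functionE) blast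
  let ?G = "\<lambda>x. V x * T x - u x * W x"
  have deriv: "(?G has_real_derivative w x * u x * (1 - lam * T x)) (at x within {-l..l})"
    if x: "x \<in> {-l..l}" for x
    by (rule DERIV_cong[OF DERIV_diff[OF DERIV_mult[OF div_form_solutionD(2)[OF s x] T_deriv[OF x]]
        DERIV_mult[OF div_form_solutionD(1)[OF s x] W_deriv[OF x]]]]) (simp add: algebra_simps)
  have "((\<lambda>x. w x * u x * (1 - lam * T x)) has_integral ?G l - ?G (-l)) {-l..l}"
    by (rule has_integral_real_derivative) (use l_pos deriv in auto)
  then have "((\<lambda>x. w x * u x * (1 - lam * T x)) has_integral 0) {-l..l}"
    using bc T_bc by simp
  then have "integral {-l..l} (\<lambda>x. w x * u x * (1 - lam * T x)) = 0"
    by (rule integral_unique)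
  moreover have "integral {-l..l} (\<lambda>x. w x * u x * (1 - lam * T x)) > 0"
  proof (rule integral_pos_continuous[of _ _ _ 0])
    have "continuous_on {-l..l} T"
      unfolding continuous_on_eq_continuous_within using T_deriv DERIV_continuous by blast
    then show "continuous_on {-l..l} (\<lambda>x. w x * u x * (1 - lam * T x))"
      using div_form_solution_continuous[OF s] w_continuous by (intro continuous_intros) auto
    have one: "1 - lam * T x > 0" if "x \<in> {-l..l}" for x
    proof -
      have "lam * T x \<le> lam * (4 * l^2 * winv_max * w_max)"
        using lam0 T_bound[OF that] by (intro mult_left_mono) auto
      then show ?thesis using small by simp
    qed
    show "0 \<le> w x * u x * (1 - lam * T x)" if "x \<in> {-l..l}" for x
    proof (cases "x = -l \<or> x = l")
      case True then show ?thesis using bc by auto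
    next
      case False then show ?thesis using that pos w_pos[of x] one[OF that]
        by (auto intro!: mult_nonneg_nonneg less_imp_le)
    qed
    show "0 < w 0 * u 0 * (1 - lam * T 0)" using pos l_pos w_pos[of 0] one[of 0] by auto
  qed (use l_pos in auto)
  ultimately show False by simp
qed

lemma picone_inequality:
  assumes s: "div_form_solution lam u V" and ab: "\<alpha> \<le> \<beta>" "-l \<le> \<alpha>" "\<beta> \<le> l"
    and pos: "\<forall>x\<in>{\<alpha>..\<beta>}. u x > 0"
  shows "(c0 + c1*\<beta>)^2 * V \<beta> / u \<beta> - (c0 + c1*\<alpha>)^2 * V \<alpha> / u \<alpha>
     \<le> c1^2 * integral {\<alpha>..\<beta>} w - lam * integral {\<alpha>..\<beta>} (\<lambda>x. w x * (c0 + c1*x)^2)"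
proof -
  have sub: "{\<alpha>..\<beta>} \<subseteq> {-l..l}" using ab by auto
  define H where "H x = (c0 + c1*x)^2 * V x / u x" for x
  define H' where "H' x = (((2 * (c0 + c1*x) * c1) * V x + (- lam * w x * u x) * (c0 + c1*x)^2) * u x
       - (c0 + c1*x)^2 * V x * (V x * winv x)) / (u x * u x)" for x
  have "(H has_real_derivative H' x) (at x within {\<alpha>..\<beta>})" if x: "x \<in> {\<alpha>..\<beta>}" for x
  proof -
    have x': "x \<in> {-l..l}" using x sub by auto
    have du: "(u has_real_derivative V x * winv x) (at x within {\<alpha>..\<beta>})"
      by (rule DERIV_subset[OF div_form_solutionD(1)[OF s x'] sub])
    have dV: "(V has_real_derivative - lam * w x * u x) (at x within {\<alpha>..\<beta>})"
      by (rule DERIV_subset[OF div_form_solutionD(2)[OF s x'] sub])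
    have dp: "((\<lambda>x. (c0 + c1*x)^2) has_real_derivative 2 * (c0 + c1*x) * c1) (at x within {\<alpha>..\<beta>})"
      by (auto intro!: derivative_eq_intros)
    show ?thesis unfolding H_def H'_def
      by (rule DERIV_divide[OF DERIV_mult[OF dp dV] du]) (use pos x in force)
  qed
  then have "(H' has_integral (H \<beta> - H \<alpha>)) {\<alpha>..\<beta>}" by (rule has_integral_real_derivative[OF ab(1)])
  then have H'_int: "H' integrable_on {\<alpha>..\<beta>}" "integral {\<alpha>..\<beta>} H' = H \<beta> - H \<alpha>"
    by (auto simp: integral_unique integrable_on_def)
  have w_cont: "continuous_on {\<alpha>..\<beta>} w" by (rule continuous_on_subset[OF w_continuous sub])
  have int1: "(\<lambda>x. c1^2 * w x) integrable_on {\<alpha>..\<beta>}"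
    by (rule integrable_continuous_interval) (intro continuous_intros w_cont)
  have int2: "(\<lambda>x. lam * (w x * (c0 + c1*x)^2)) integrable_on {\<alpha>..\<beta>}"
    by (rule integrable_continuous_interval) (intro continuous_intros w_cont)
  have "integral {\<alpha>..\<beta>} H' \<le> integral {\<alpha>..\<beta>} (\<lambda>x. c1^2 * w x - lam * (w x * (c0 + c1*x)^2))"
  proof (rule integral_le[OF H'_int(1) integrable_diff[OF int1 int2]])
    fix x assume x: "x \<in> {\<alpha>..\<beta>}"
    have "H' x = c1^2 * w x - lam * (w x * (c0 + c1*x)^2) - w x * (c1 - (c0 + c1*x) * V x * winv x / u x)^2"
      unfolding H'_def by (rule picone_identity) (use pos x w_pos w_winv in auto)
    moreover have "w x * (c1 - (c0 + c1*x) * V x * winv x / u x)^2 \<ge> 0"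
      using w_pos[of x] by simp
    ultimately show "H' x \<le> c1^2 * w x - lam * (w x * (c0 + c1*x)^2)" by linarith
  qed
  also have "\<dots> = c1^2 * integral {\<alpha>..\<beta>} w - lam * integral {\<alpha>..\<beta>} (\<lambda>x. w x * (c0 + c1*x)^2)"
    by (simp add: integral_diff[OF int1 int2])
  finally show ?thesis using H'_int(2) by (simp add: H_def)
qed

text \<open>Picone's inequality for the trapezoidal test function equal to \<open>1\<close> on \<open>[-s, s]\<close>, to \<open>0\<close>
  outside \<open>[-t, t]\<close>, and linear in between.\<close>
lemma positive_eigenvalue_trapezoid_bound:
  assumes s: "div_form_solution lam u V" and st: "0 < s" "s < t" "t < l"
    and pos: "\<forall>x\<in>{-t..t}. u x > 0" and lam0: "lam \<ge> 0"
  shows "lam * integral {-s..s} w \<le> (integral {-t..-s} w + integral {s..t} w) / (t - s)^2"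
proof -
  have ne: "t - s \<noteq> 0" using st by simp
  have sq_nonneg: "lam * integral {c..d} (\<lambda>x. w x * (c0 + c1 * x)^2) \<ge> 0"
    if "-l \<le> c" "d \<le> l" for c d c0 c1
  proof (intro mult_nonneg_nonneg[OF lam0] integral_nonneg)
    show "(\<lambda>x. w x * (c0 + c1 * x)^2) integrable_on {c..d}"
      using that by (intro integrable_continuous_interval continuous_intros continuous_on_subset[OF w_continuous]) auto
  qed (metis w_pos less_imp_le mult_nonneg_nonneg zero_le_power2)
  have left: "(t/(t-s) + (1/(t-s))*(-s))^2 * V (-s) / u (-s) - (t/(t-s) + (1/(t-s))*(-t))^2 * V (-t) / u (-t)
     \<le> (1/(t-s))^2 * integral {-t..-s} w - lam * integral {-t..-s} (\<lambda>x. w x * (t/(t-s) + (1/(t-s))*x)^2)"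
    by (rule picone_inequality[OF s]) (use st pos in auto)
  have middle: "V s / u s - V (-s) / u (-s) \<le> - (lam * integral {-s..s} w)"
    using picone_inequality[OF s, of "-s" s 1 0] st pos by simp
  have right: "(t/(t-s) + (-1/(t-s))*t)^2 * V t / u t - (t/(t-s) + (-1/(t-s))* s)^2 * V s / u s
     \<le> (-1/(t-s))^2 * integral {s..t} w - lam * integral {s..t} (\<lambda>x. w x * (t/(t-s) + (-1/(t-s))*x)^2)"
    by (rule picone_inequality[OF s]) (use st pos in auto)
  have coeffs: "t/(t-s) + (1/(t-s))*(-s) = 1" "t/(t-s) + (1/(t-s))*(-t) = 0"
    "t/(t-s) + (-1/(t-s))*t = 0" "t/(t-s) + (-1/(t-s))* s = 1"
    using ne by (simp_all add: divide_simps)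
  have "lam * integral {-t..-s} (\<lambda>x. w x * (t/(t-s) + (1/(t-s))*x)^2) \<ge> 0"
    by (rule sq_nonneg) (use st in auto)
  moreover have "lam * integral {s..t} (\<lambda>x. w x * (t/(t-s) + (-1/(t-s))*x)^2) \<ge> 0"
    by (rule sq_nonneg) (use st in auto)
  ultimately have "lam * integral {-s..s} w \<le> (1/(t-s))^2 * integral {-t..-s} w + (-1/(t-s))^2 * integral {s..t} w"
    using left middle right unfolding coeffs by simp
  also have "\<dots> = (integral {-t..-s} w + integral {s..t} w) / (t - s)^2"
    by (simp add: power_divide add_divide_distrib)
  finally show ?thesis .
qed

lemma drift_coefficient_bound: "\<bar>p * a y\<bar> \<le> p * M"
  using a_bounded[of y] p_pos by (simp add: abs_mult)

text \<open>\<open>V/w\<close> is Lipschitz, so its almost everywhere derivative \<open>p a (V/w) - \<lambda> u\<close> integrates back.\<close>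
lemma flux_quotient_integral:
  assumes V_deriv: "\<And>x. x \<in> {-l..l} \<Longrightarrow> (V has_real_derivative - lam * w x * u x) (at x within {-l..l})"
    and u_cont: "continuous_on {-l..l} u" and x: "x \<in> {-l..l}"
  shows "(\<lambda>y. p * a y * (V y * winv y) - lam * u y) integrable_on {-l..x}"
    "integral {-l..x} (\<lambda>y. p * a y * (V y * winv y) - lam * u y) = V x * winv x - V (-l) * winv (-l)"
proof -
  have V_cont: "continuous_on {-l..l} V"
    unfolding continuous_on_eq_continuous_within using V_deriv DERIV_continuous by blast
  obtain BV where BV: "BV \<ge> 0" "\<And>x. x \<in> {-l..l} \<Longrightarrow> \<bar>V x\<bar> \<le> BV"
    using continuous_on_interval_abs_boundE[OF V_cont] by blast
  obtain Bu where Bu: "Bu \<ge> 0" "\<And>x. x \<in> {-l..l} \<Longrightarrow> \<bar>u x\<bar> \<le> Bu"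
    using continuous_on_interval_abs_boundE[OF u_cont] by blast
  have V_lip: "(\<bar>lam\<bar> * w_max * Bu)-lipschitz_on {-l..l} V"
  proof (rule lipschitz_on_real_derivative_bound[OF V_deriv])
    fix y assume y: "y \<in> {-l..l}"
    have "\<bar>- lam * w y * u y\<bar> = \<bar>lam\<bar> * w y * \<bar>u y\<bar>" using w_pos[of y] by (simp add: abs_mult)
    also have "\<dots> \<le> \<bar>lam\<bar> * w_max * Bu"
      by (intro mult_mono w_le y Bu(2)) (use w_pos[of y] w_max_pos in \<open>auto intro: less_imp_le\<close>)
    finally show "\<bar>- lam * w y * u y\<bar> \<le> \<bar>lam\<bar> * w_max * Bu" .
  qed (use Bu w_max_pos in auto)
  have "(BV * (winv_max * (p * L)) + winv_max * (\<bar>lam\<bar> * w_max * Bu))-lipschitz_on {-l..x}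
      (\<lambda>y. V y * winv y)"
    by (rule lipschitz_on_subset[OF lipschitz_on_mult_bounded[OF V_lip winv_lipschitz BV(2)]])
       (use x winv_le BV winv_max_pos in \<open>auto intro: less_imp_le simp: abs_of_pos winv_pos\<close>)
  moreover have "((\<lambda>y. V y * winv y) has_real_derivative p * a y * (V y * winv y) - lam * u y) (at y)"
    if y: "y \<in> {-l<..<x}" "y \<notin> N" for y
  proof -
    have y': "y \<in> {-l<..<l}" using y x by auto
    have "(V has_real_derivative (- lam * w y * u y)) (at y)"
      using V_deriv[of y] at_within_Icc_at[of "-l" y l] y' by simp
    from DERIV_mult[OF this winv_deriv[OF y' y(2)]] show ?thesis
      by (rule DERIV_cong) (simp add: algebra_simps w_winv[of y] w_winv[of y, unfolded mult.commute[of "w y"]])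
  qed
  ultimately show "(\<lambda>y. p * a y * (V y * winv y) - lam * u y) integrable_on {-l..x}"
    "integral {-l..x} (\<lambda>y. p * a y * (V y * winv y) - lam * u y) = V x * winv x - V (-l) * winv (-l)"
    using integral_lipschitz_ae_derivative[OF _ _ N_negligible] x by auto
qed

lemma positive_eigenpair_if_div_form_solution:
  assumes s: "div_form_solution lam u V" and bc: "u (-l) = 0" "u l = 0"
    and pos: "\<forall>x\<in>{-l<..<l}. u x > 0"
  shows "positive_eigenpair a l p lam u"
proof -
  define u' where "u' y = V y * winv y" for y
  define u'' where "u'' y = p * a y * u' y - lam * u y" for y
  have u_cont: "continuous_on {-l..l} u" using div_form_solution_continuous[OF s] by simp
  note flux = flux_quotient_integral[OF div_form_solutionD(2)[OF s] u_cont]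
  have u''_eq: "u'' = (\<lambda>y. p * a y * (V y * winv y) - lam * u y)" by (rule ext) (simp add: u''_def u'_def)
  have u'_cont: "continuous_on {-l..l} u'"
    unfolding u'_def using div_form_solution_continuous[OF s] winv_continuous by (intro continuous_intros) auto
  have "u'' absolutely_integrable_on {-l..l}"
  proof (rule absolutely_integrable_integrable_bound)
    show "norm (u'' x) \<le> p * M * \<bar>u' x\<bar> + \<bar>lam\<bar> * \<bar>u x\<bar>" if "x \<in> {-l..l}" for x
    proof -
      have "\<bar>u'' x\<bar> \<le> \<bar>p * a x * u' x\<bar> + \<bar>lam * u x\<bar>" unfolding u''_def by (rule abs_triangle_ineq4)
      then show ?thesis
        using mult_right_mono[OF drift_coefficient_bound[of x], of "\<bar>u' x\<bar>"] by (simp add: abs_mult)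
    qed
    show "u'' integrable_on {-l..l}" using flux(1)[of l] l_pos unfolding u''_eq by simp
    show "(\<lambda>x. p * M * \<bar>u' x\<bar> + \<bar>lam\<bar> * \<bar>u x\<bar>) integrable_on {-l..l}"
      by (rule integrable_continuous_interval) (intro continuous_intros u'_cont u_cont)
  qed
  moreover have "\<forall>x\<in>{-l..l}. u' x = u' (-l) + integral {-l..x} u''"
    using flux(2) unfolding u''_eq by (simp add: u'_def)
  moreover have "\<forall>x\<in>{-l..l}. (u has_real_derivative u' x) (at x within {-l..l})"
    using div_form_solutionD(1)[OF s] by (simp add: u'_def)
  moreover have "AE x in lborel. x \<in> {-l<..<l} \<longrightarrow> - u'' x + p * a x * u' x = lam * u x"
    by (simp add: u''_def)
  ultimately show ?thesis unfolding positive_eigenpair_def using bc pos by blast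
qed

lemma eigenpair_flux_defect:
  assumes u_cont: "continuous_on {-l..l} u" and u''_int: "u'' integrable_on {-l..l}"
    and u'_eq: "\<And>x. x \<in> {-l..l} \<Longrightarrow> u' x = u' (-l) + integral {-l..x} u''"
    and N': "negligible N'"
    and eqn: "\<And>x. x \<in> {-l<..<l} \<Longrightarrow> x \<notin> N' \<Longrightarrow> - u'' x + p * a x * u' x = lam * u x"
    and V_deriv: "\<And>x. x \<in> {-l..l} \<Longrightarrow> (V has_real_derivative - lam * w x * u x) (at x within {-l..l})"
    and V_left: "V (-l) * winv (-l) = u' (-l)"
    and x: "x \<in> {-l..l}"
  shows "(\<lambda>y. p * a y * (u' y - V y * winv y)) integrable_on {-l..x}"
    "u' x - V x * winv x = integral {-l..x} (\<lambda>y. p * a y * (u' y - V y * winv y))"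
proof -
  define g where "g = (\<lambda>y. p * a y * u' y - lam * u y)"
  define h where "h = (\<lambda>y. p * a y * (V y * winv y) - lam * u y)"
  have u''_sub: "u'' integrable_on {-l..x}" by (rule integrable_on_subinterval[OF u''_int]) (use x in auto)
  have spike: "u'' y = g y" if "y \<in> {-l..x} - (N' \<union> {-l, x})" for y
    using eqn[of y] that x by (auto simp: g_def)
  have g_int: "g integrable_on {-l..x}"
    by (rule integrable_spike[OF u''_sub, of "N' \<union> {-l, x}"]) (use N' spike in auto)
  have u''_g: "integral {-l..x} u'' = integral {-l..x} g"
    by (rule integral_spike[of "N' \<union> {-l, x}"]) (use N' spike in auto)
  have h_int: "h integrable_on {-l..x}"
    unfolding h_def by (rule flux_quotient_integral(1)[OF V_deriv u_cont x])
  have defect: "(\<lambda>y. p * a y * (u' y - V y * winv y)) = (\<lambda>y. g y - h y)"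
    by (rule ext) (simp add: g_def h_def algebra_simps)
  show "(\<lambda>y. p * a y * (u' y - V y * winv y)) integrable_on {-l..x}"
    unfolding defect by (rule integrable_diff[OF g_int h_int])
  have "u' x - V x * winv x = (u' (-l) + integral {-l..x} g) - (V (-l) * winv (-l) + integral {-l..x} h)"
    using u'_eq[OF x] flux_quotient_integral(2)[OF V_deriv u_cont x] u''_g unfolding h_def by simp
  also have "\<dots> = integral {-l..x} (\<lambda>y. g y - h y)"
    using V_left integral_diff[OF g_int h_int] by simp
  finally show "u' x - V x * winv x = integral {-l..x} (\<lambda>y. p * a y * (u' y - V y * winv y))"
    unfolding defect .
qed

text \<open>Set \<open>V(x) = (w u')(-l) - \<lambda> \<integral>\<^sub>-\<^sub>l\<^sup>x w u\<close>; the defect \<open>u' - V/w\<close> solves a homogeneous Volterra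
  equation with bounded kernel \<open>p a\<close>, so it vanishes.\<close>
lemma div_form_solution_if_positive_eigenpair:
  assumes "positive_eigenpair a l p lam u"
  shows "\<exists>V. div_form_solution lam u V"
proof -
  obtain u' u'' N' where
    u_deriv: "\<And>x. x \<in> {-l..l} \<Longrightarrow> (u has_real_derivative u' x) (at x within {-l..l})" and
    u''_int: "u'' integrable_on {-l..l}" and
    u'_eq: "\<And>x. x \<in> {-l..l} \<Longrightarrow> u' x = u' (-l) + integral {-l..x} u''" and
    N': "negligible N'" and
    eqn: "\<And>x. x \<in> {-l<..<l} \<Longrightarrow> x \<notin> N' \<Longrightarrow> - u'' x + p * a x * u' x = lam * u x"
    using positive_eigenpairE[OF assms] by blast
  have u_cont: "continuous_on {-l..l} u"
    unfolding continuous_on_eq_continuous_within using u_deriv DERIV_continuous by blast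
  have u'_cont: "continuous_on {-l..l} u'"
  proof -
    have "continuous_on {-l..l} (\<lambda>x. u' (-l) + integral {-l..x} u'')"
      by (intro continuous_intros indefinite_integral_continuous_1 u''_int)
    then show ?thesis by (rule continuous_on_eq) (use u'_eq in metis)
  qed
  have wu_cont: "continuous_on {-l..l} (\<lambda>t. w t * u t)" by (intro continuous_intros w_continuous u_cont)
  define V where "V x = w (-l) * u' (-l) - lam * integral {-l..x} (\<lambda>t. w t * u t)" for x
  have V_deriv: "(V has_real_derivative - lam * w x * u x) (at x within {-l..l})" if "x \<in> {-l..l}" for x
    unfolding V_def
    by (rule DERIV_cong[OF DERIV_diff[OF DERIV_const DERIV_cmult[OF integral_has_real_derivative[OF wu_cont that]]]])
       simp
  have V_left: "V (-l) * winv (-l) = u' (-l)"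
    using w_winv[of "-l"] by (simp add: V_def algebra_simps)
  have defect_cont: "continuous_on {-l..l} (\<lambda>y. u' y - V y * winv y)"
  proof -
    have "continuous_on {-l..l} V"
      unfolding continuous_on_eq_continuous_within using V_deriv DERIV_continuous by blast
    then show ?thesis by (intro continuous_intros u'_cont winv_continuous)
  qed
  have defect: "(\<lambda>y. p * a y * (u' y - V y * winv y)) integrable_on {-l..x}"
    "u' x - V x * winv x = integral {-l..x} (\<lambda>y. p * a y * (u' y - V y * winv y))"
    if "x \<in> {-l..l}" for x
    by (rule eigenpair_flux_defect[of u u'' u' N' lam V x];
        use u_cont u''_int u'_eq N' eqn V_deriv V_left that in blast)+
  have flux_eq: "u' x = V x * winv x" if "x \<in> {-l..l}" for x
    using integral_volterra_eq_0[where D = "\<lambda>y. u' y - V y * winv y" and k = "\<lambda>y. p * a y",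
        OF defect_cont drift_coefficient_bound defect that] by simp
  then have "div_form_solution lam u V"
    unfolding div_form_solution_def using u_deriv V_deriv by (auto simp flip: flux_eq)
  then show ?thesis by blast
qed

section \<open>Existence by shooting\<close>

definition volterra_base where "volterra_base x = integral {-l..x} winv"

text \<open>\<open>volterra_op f\<close> is the solution of \<open>(w u')' = w f\<close> with \<open>u(-l) = (w u')(-l) = 0\<close>.\<close>
definition volterra_op where "volterra_op f x = integral {-l..x} (\<lambda>s. winv s * integral {-l..s} (\<lambda>t. w t * f t))"

definition volterra_iter where "volterra_iter n = (volterra_op ^^ n) volterra_base"

lemma volterra_iter_Suc: "volterra_iter (Suc n) = volterra_op (volterra_iter n)" by (simp add: volterra_iter_def)
lemma volterra_iter_0: "volterra_iter 0 = volterra_base" by (simp add: volterra_iter_def)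

lemma weighted_primitive_continuous:
  assumes "continuous_on {-l..l} f"
  shows "continuous_on {-l..l} (\<lambda>s. integral {-l..s} (\<lambda>t. w t * f t))"
  by (intro indefinite_integral_continuous_1 integrable_continuous_interval continuous_intros w_continuous assms)

lemma volterra_integrand_continuous:
  assumes "continuous_on {-l..l} f"
  shows "continuous_on {-l..l} (\<lambda>s. winv s * integral {-l..s} (\<lambda>t. w t * f t))"
  by (intro continuous_intros winv_continuous weighted_primitive_continuous assms)

lemma volterra_op_continuous:
  assumes "continuous_on {-l..l} f"
  shows "continuous_on {-l..l} (volterra_op f)"
  unfolding volterra_op_def
  by (intro indefinite_integral_continuous_1 integrable_continuous_interval volterra_integrand_continuous assms)

lemma volterra_base_continuous: "continuous_on {-l..l} volterra_base"
  unfolding volterra_base_def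
  by (intro indefinite_integral_continuous_1 integrable_continuous_interval winv_continuous)

lemma volterra_iter_continuous: "continuous_on {-l..l} (volterra_iter n)"
  by (induction n) (simp_all add: volterra_iter_0 volterra_iter_Suc volterra_base_continuous volterra_op_continuous)

lemma integral_power_bound:
  assumes g: "continuous_on {-l..l} g" and C: "C \<ge> 0"
    and le: "\<And>t. t \<in> {-l..l} \<Longrightarrow> \<bar>g t\<bar> \<le> C * (t + l)^k / fact k"
    and x: "x \<in> {-l..l}"
  shows "\<bar>integral {-l..x} g\<bar> \<le> C * (x + l)^(Suc k) / fact (Suc k)"
proof -
  have sub: "{-l..x} \<subseteq> {-l..l}" using x by auto
  have "norm (integral {-l..x} g) \<le> integral {-l..x} (\<lambda>t. C * (t + l)^k / fact k)"
  proof (rule integral_norm_bound_integral)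
    show "g integrable_on {-l..x}" by (rule integrable_continuous_interval[OF continuous_on_subset[OF g sub]])
    show "(\<lambda>t. C * (t + l)^k / fact k) integrable_on {-l..x}"
      by (rule integrable_continuous_interval, intro continuous_intros) auto
    show "norm (g t) \<le> C * (t + l)^k / fact k" if "t \<in> {-l..x}" for t using le[of t] that sub by auto
  qed
  then show ?thesis using integral_power_over_fact[of "-l" x C k] x by simp
qed

lemma volterra_op_bound:
  assumes f: "continuous_on {-l..l} f" and c: "c \<ge> 0"
    and le: "\<And>t. t \<in> {-l..l} \<Longrightarrow> \<bar>f t\<bar> \<le> c * (t + l)^k / fact k"
    and x: "x \<in> {-l..l}"
  shows "\<bar>volterra_op f x\<bar> \<le> (winv_max * (w_max * c)) * (x + l)^(Suc (Suc k)) / fact (Suc (Suc k))"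
proof -
  have inner: "\<bar>integral {-l..s} (\<lambda>t. w t * f t)\<bar> \<le> (w_max * c) * (s + l)^(Suc k) / fact (Suc k)"
    if s: "s \<in> {-l..l}" for s
  proof (rule integral_power_bound[OF _ _ _ s])
    show "continuous_on {-l..l} (\<lambda>t. w t * f t)" by (intro continuous_intros w_continuous f)
    show "0 \<le> w_max * c" using w_max_pos c by simp
    fix t assume t: "t \<in> {-l..l}"
    have "\<bar>w t * f t\<bar> = w t * \<bar>f t\<bar>" using w_pos[of t] by (simp add: abs_mult)
    also have "\<dots> \<le> w_max * (c * (t + l)^k / fact k)"
      by (rule mult_mono) (use w_le[OF t] le[OF t] w_max_pos in auto)
    finally show "\<bar>w t * f t\<bar> \<le> w_max * c * (t + l)^k / fact k" by simp
  qed
  show ?thesis unfolding volterra_op_def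
  proof (rule integral_power_bound[OF volterra_integrand_continuous[OF f] _ _ x])
    show "0 \<le> winv_max * (w_max * c)" using winv_max_pos w_max_pos c by simp
    fix t assume t: "t \<in> {-l..l}"
    have "\<bar>winv t * integral {-l..t} (\<lambda>t. w t * f t)\<bar> = winv t * \<bar>integral {-l..t} (\<lambda>t. w t * f t)\<bar>"
      using winv_pos[of t] by (simp add: abs_mult)
    also have "\<dots> \<le> winv_max * ((w_max * c) * (t + l)^(Suc k) / fact (Suc k))"
      by (rule mult_mono) (use winv_le[OF t] inner[OF t] winv_max_pos in auto)
    finally show "\<bar>winv t * integral {-l..t} (\<lambda>t. w t * f t)\<bar> \<le> winv_max * (w_max * c) * (t + l)^(Suc k) / fact (Suc k)"
      by simp
  qed
qed

lemma volterra_iter_bound: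
  assumes x: "x \<in> {-l..l}"
  shows "\<bar>volterra_iter n x\<bar> \<le> winv_max * (winv_max * w_max)^n * (x + l)^(2*n+1) / fact (2*n+1)"
  using x
proof (induction n arbitrary: x)
  case 0
  have "\<bar>volterra_base x\<bar> \<le> winv_max * (x + l)^(Suc 0) / fact (Suc 0)"
    unfolding volterra_base_def
    by (rule integral_power_bound[OF winv_continuous _ _ 0(1), of winv_max 0]) (use winv_max_pos winv_le winv_pos in \<open>auto simp: abs_of_pos\<close>)
  then show ?case by (simp add: volterra_iter_0)
next
  case (Suc n)
  have "\<bar>volterra_op (volterra_iter n) x\<bar> \<le> (winv_max * (w_max * (winv_max * (winv_max * w_max)^n))) * (x + l)^(Suc (Suc (2*n+1))) / fact (Suc (Suc (2*n+1)))"
  proof (rule volterra_op_bound[OF volterra_iter_continuous _ _ Suc(2)])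
    show "0 \<le> winv_max * (winv_max * w_max)^n" using winv_max_pos w_max_pos by simp
    show "\<bar>volterra_iter n t\<bar> \<le> winv_max * (winv_max * w_max)^n * (t + l)^(2*n+1) / fact (2*n+1)" if "t \<in> {-l..l}" for t
      using Suc(1)[OF that] by simp
  qed
  moreover have "(winv_max * (w_max * (winv_max * (winv_max * w_max)^n))) = winv_max * (winv_max * w_max)^(Suc n)"
    by (simp add: algebra_simps)
  moreover have "Suc (Suc (2*n+1)) = 2 * Suc n + 1" by simp
  ultimately show ?case by (simp add: volterra_iter_Suc)
qed

definition shoot_majorant where "shoot_majorant \<Lambda> n = winv_max * (2 * l) * (inverse (fact n) * (\<Lambda> * winv_max * w_max * (4 * l^2))^n)"

lemma shoot_majorant_summable: "summable (shoot_majorant \<Lambda>)"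
  unfolding shoot_majorant_def by (intro summable_mult summable_exp)

lemma shoot_term_bound:
  assumes lam: "\<bar>lam\<bar> \<le> \<Lambda>" and x: "x \<in> {-l..l}"
  shows "norm ((-lam)^n * volterra_iter n x) \<le> shoot_majorant \<Lambda> n"
proof -
  have L0: "0 \<le> \<Lambda>" using lam by simp
  have xl: "0 \<le> x + l" "x + l \<le> 2 * l" using x by auto
  have "norm ((-lam)^n * volterra_iter n x) = \<bar>lam\<bar>^n * \<bar>volterra_iter n x\<bar>" by (simp add: abs_mult power_abs)
  also have "\<dots> \<le> \<Lambda>^n * (winv_max * (winv_max * w_max)^n * (x + l)^(2*n+1) / fact (2*n+1))"
    by (rule mult_mono) (use lam volterra_iter_bound[OF x] in \<open>auto intro: power_mono\<close>)
  also have "\<dots> \<le> \<Lambda>^n * (winv_max * (winv_max * w_max)^n * (2 * l)^(2*n+1) / fact n)"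
  proof (rule mult_left_mono)
    have f: "fact n \<le> (fact (2*n+1) :: real)" by (rule fact_mono) simp
    have "(x + l)^(2*n+1) \<le> (2 * l)^(2*n+1)" by (rule power_mono) (use xl in auto)
    then have "winv_max * (winv_max * w_max)^n * (x + l)^(2*n+1) \<le> winv_max * (winv_max * w_max)^n * (2 * l)^(2*n+1)"
      by (rule mult_left_mono) (use winv_max_pos w_max_pos in simp)
    moreover have "0 \<le> winv_max * (winv_max * w_max)^n * (2 * l)^(2*n+1)" using winv_max_pos w_max_pos l_pos by simp
    ultimately show "winv_max * (winv_max * w_max)^n * (x + l)^(2*n+1) / fact (2*n+1)
        \<le> winv_max * (winv_max * w_max)^n * (2 * l)^(2*n+1) / fact n"
      using f by (meson divide_left_mono fact_gt_zero frac_le order_trans less_imp_le fact_ge_zero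
          divide_right_mono mult_pos_pos)
  qed (use L0 in simp)
  also have "\<dots> = shoot_majorant \<Lambda> n"
    by (simp add: shoot_majorant_def power_mult_distrib power_mult power2_eq_square field_simps
        power_mult_distrib[of 2 2 n, symmetric])
  finally show ?thesis .
qed

text \<open>The shooting solution with \<open>u(-l) = 0\<close> and \<open>(w u')(-l) = 1\<close>: the Neumann series of
  \<open>u = volterra_base - \<lambda> volterra_op u\<close>.\<close>
definition shoot where "shoot lam x = (\<Sum>n. (-lam)^n * volterra_iter n x)"

lemma shoot_summable: "x \<in> {-l..l} \<Longrightarrow> summable (\<lambda>n. (-lam)^n * volterra_iter n x)"
  by (rule summable_comparison_test[OF _ shoot_majorant_summable[of "\<bar>lam\<bar>"]]) (use shoot_term_bound in auto)

lemma shoot_bound: "\<bar>lam\<bar> \<le> \<Lambda> \<Longrightarrow> x \<in> {-l..l} \<Longrightarrow> \<bar>shoot lam x\<bar> \<le> suminf (shoot_majorant \<Lambda>)"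
  unfolding shoot_def using norm_suminf_le[OF shoot_term_bound shoot_majorant_summable] by simp

lemma shoot_continuous:
  "continuous_on ({-\<Lambda>..\<Lambda>} \<times> {-l..l}) (\<lambda>z. shoot (fst z) (snd z))"
proof -
  let ?A = "{-\<Lambda>..\<Lambda>} \<times> {-l..l}"
  have ul: "uniform_limit ?A (\<lambda>n z. \<Sum>i<n. (- fst z)^i * volterra_iter i (snd z)) (\<lambda>z. \<Sum>i. (- fst z)^i * volterra_iter i (snd z)) sequentially"
    by (rule Weierstrass_m_test[OF _ shoot_majorant_summable[of \<Lambda>]]) (clarsimp simp del: real_norm_def, rule shoot_term_bound, auto)
  have c: "continuous_on ?A (\<lambda>z. \<Sum>i<n. (- fst z)^i * volterra_iter i (snd z))" for n
  proof (intro continuous_on_sum continuous_intros)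
    fix i
    show "continuous_on ?A (\<lambda>z. volterra_iter i (snd z))"
      by (rule continuous_on_compose2[OF volterra_iter_continuous[of i]]) (auto intro: continuous_intros)
  qed
  show ?thesis unfolding shoot_def
    by (rule uniform_limit_theorem[OF _ ul]) (use c in auto)
qed

lemma shoot_continuous_in_x: "continuous_on {-l..l} (shoot lam)"
proof -
  have "continuous_on {-l..l} ((\<lambda>z. shoot (fst z) (snd z)) \<circ> (\<lambda>x. (lam, x)))"
    by (rule continuous_on_compose[OF _ continuous_on_subset[OF shoot_continuous[of "\<bar>lam\<bar>"]]])
       (auto intro!: continuous_intros)
  then show ?thesis by (simp add: o_def)
qed

lemma shoot_continuous_in_lam: "x \<in> {-l..l} \<Longrightarrow> continuous_on {-\<Lambda>..\<Lambda>} (\<lambda>lam. shoot lam x)"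
proof -
  assume x: "x \<in> {-l..l}"
  have "continuous_on {-\<Lambda>..\<Lambda>} ((\<lambda>z. shoot (fst z) (snd z)) \<circ> (\<lambda>lam. (lam, x)))"
    by (rule continuous_on_compose[OF _ continuous_on_subset[OF shoot_continuous[of \<Lambda>]]])
       (use x in \<open>auto intro!: continuous_intros\<close>)
  then show ?thesis by (simp add: o_def)
qed


lemma volterra_op_linear:
  assumes f: "continuous_on {-l..l} f" and g: "continuous_on {-l..l} g" and x: "x \<in> {-l..l}"
  shows "volterra_op (\<lambda>t. f t + c * g t) x = volterra_op f x + c * volterra_op g x"
proof -
  have sub: "{-l..s} \<subseteq> {-l..l}" if "s \<in> {-l..x}" for s using that x by auto
  have eq: "winv s * integral {-l..s} (\<lambda>t. w t * (f t + c * g t)) =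
      winv s * integral {-l..s} (\<lambda>t. w t * f t) + c * (winv s * integral {-l..s} (\<lambda>t. w t * g t))"
    if s: "s \<in> {-l..x}" for s
  proof -
    have i1: "(\<lambda>t. w t * f t) integrable_on {-l..s}"
      by (rule integrable_continuous_interval, rule continuous_on_subset[OF _ sub[OF s]])
         (intro continuous_intros w_continuous f)
    have i2: "(\<lambda>t. c * (w t * g t)) integrable_on {-l..s}"
      by (rule integrable_continuous_interval, rule continuous_on_subset[OF _ sub[OF s]])
         (intro continuous_intros w_continuous g)
    have "integral {-l..s} (\<lambda>t. w t * (f t + c * g t)) = integral {-l..s} (\<lambda>t. w t * f t + c * (w t * g t))"
      by (simp add: algebra_simps)
    also have "\<dots> = integral {-l..s} (\<lambda>t. w t * f t) + c * integral {-l..s} (\<lambda>t. w t * g t)"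
      using integral_add[OF i1 i2] by simp
    finally show ?thesis by (simp add: algebra_simps)
  qed
  have o1: "(\<lambda>s. winv s * integral {-l..s} (\<lambda>t. w t * f t)) integrable_on {-l..x}"
    by (rule integrable_continuous_interval, rule continuous_on_subset[OF volterra_integrand_continuous[OF f]]) (use x in auto)
  have o2: "(\<lambda>s. c * (winv s * integral {-l..s} (\<lambda>t. w t * g t))) integrable_on {-l..x}"
    by (rule integrable_continuous_interval, rule continuous_on_subset[of "{-l..l}"],
        rule continuous_on_mult[OF continuous_on_const volterra_integrand_continuous[OF g]]) (use x in auto)
  have "volterra_op (\<lambda>t. f t + c * g t) x = integral {-l..x} (\<lambda>s. winv s * integral {-l..s} (\<lambda>t. w t * f t) +
         c * (winv s * integral {-l..s} (\<lambda>t. w t * g t)))"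
    unfolding volterra_op_def by (rule integral_cong) (rule eq)
  also have "\<dots> = volterra_op f x + c * volterra_op g x"
    unfolding volterra_op_def using integral_add[OF o1 o2] by simp
  finally show ?thesis .
qed

lemma volterra_op_partial_sum:
  assumes x: "x \<in> {-l..l}"
  shows "volterra_op (\<lambda>t. \<Sum>n<k. (-lam)^n * volterra_iter n t) x = (\<Sum>n<k. (-lam)^n * volterra_iter (Suc n) x)"
proof (induction k)
  case 0
  then show ?case by (simp add: volterra_op_def)
next
  case (Suc k)
  have c: "continuous_on {-l..l} (\<lambda>t. \<Sum>n<k. (-lam)^n * volterra_iter n t)"
    by (intro continuous_on_sum continuous_intros volterra_iter_continuous)
  have "volterra_op (\<lambda>t. \<Sum>n<Suc k. (-lam)^n * volterra_iter n t) x = volterra_op (\<lambda>t. (\<Sum>n<k. (-lam)^n * volterra_iter n t) + (-lam)^k * volterra_iter k t) x"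
    by simp
  also have "\<dots> = volterra_op (\<lambda>t. \<Sum>n<k. (-lam)^n * volterra_iter n t) x + (-lam)^k * volterra_op (volterra_iter k) x"
    by (rule volterra_op_linear[OF c volterra_iter_continuous x])
  finally show ?case using Suc by (simp add: volterra_iter_Suc)
qed

lemma weighted_primitive_bound:
  assumes f: "continuous_on {-l..l} f" and B: "\<And>t. t \<in> {-l..l} \<Longrightarrow> \<bar>f t\<bar> \<le> B"
    and s: "s \<in> {-l..l}"
  shows "\<bar>integral {-l..s} (\<lambda>t. w t * f t)\<bar> \<le> w_max * B * (s + l)"
proof -
  have "norm (integral {-l..s} (\<lambda>t. w t * f t)) \<le> w_max * B * (s - - l)"
  proof (rule integral_bound)
    show "continuous_on {-l..s} (\<lambda>t. w t * f t)"
      by (rule continuous_on_subset[of "{-l..l}"]) (use s in \<open>intro continuous_intros w_continuous f, auto\<close>)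
    fix t assume "t \<in> {-l..s}"
    then have t: "t \<in> {-l..l}" using s by auto
    have "\<bar>w t * f t\<bar> = w t * \<bar>f t\<bar>" using w_pos[of t] by (simp add: abs_mult)
    also have "\<dots> \<le> w_max * B" by (rule mult_mono) (use w_le[OF t] B[OF t] w_max_pos in auto)
    finally show "norm (w t * f t) \<le> w_max * B" by simp
  qed (use s in auto)
  then show ?thesis by simp
qed

lemma weighted_primitive_tendsto:
  assumes fc: "\<And>k. continuous_on {-l..l} (f k)" and fb: "\<And>k t. t \<in> {-l..l} \<Longrightarrow> \<bar>f k t\<bar> \<le> B"
    and conv: "\<And>t. t \<in> {-l..l} \<Longrightarrow> (\<lambda>k. f k t) \<longlonglongrightarrow> F t" and s: "s \<in> {-l..l}"
  shows "(\<lambda>k. integral {-l..s} (\<lambda>t. w t * f k t)) \<longlonglongrightarrow> integral {-l..s} (\<lambda>t. w t * F t)"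
proof (rule dominated_convergence(2)[where h="\<lambda>_. w_max * B"])
  have sub: "{-l..s} \<subseteq> {-l..l}" using s by auto
  show "(\<lambda>t. w t * f k t) integrable_on {-l..s}" for k
    by (rule integrable_continuous_interval, rule continuous_on_subset[OF _ sub]) (intro continuous_intros w_continuous fc)
  show "(\<lambda>_. w_max * B) integrable_on {-l..s}"
    by (rule integrable_continuous_interval) (rule continuous_on_const)
  show "norm (w t * f k t) \<le> w_max * B" if "t \<in> {-l..s}" for k t
  proof -
    have t: "t \<in> {-l..l}" using that sub by auto
    have "\<bar>w t * f k t\<bar> = w t * \<bar>f k t\<bar>" using w_pos[of t] by (simp add: abs_mult)
    also have "\<dots> \<le> w_max * B" by (rule mult_mono) (use w_le[OF t] fb[OF t] w_max_pos in auto)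
    finally show ?thesis by simp
  qed
  show "(\<lambda>k. w t * f k t) \<longlonglongrightarrow> w t * F t" if "t \<in> {-l..s}" for t
    using that sub by (intro tendsto_mult_left conv) auto
qed

lemma volterra_op_tendsto:
  assumes fc: "\<And>k. continuous_on {-l..l} (f k)" and B: "B \<ge> 0"
    and fb: "\<And>k t. t \<in> {-l..l} \<Longrightarrow> \<bar>f k t\<bar> \<le> B"
    and conv: "\<And>t. t \<in> {-l..l} \<Longrightarrow> (\<lambda>k. f k t) \<longlonglongrightarrow> F t"
    and x: "x \<in> {-l..l}"
  shows "(\<lambda>k. volterra_op (f k) x) \<longlonglongrightarrow> volterra_op F x"
  unfolding volterra_op_def
proof (rule dominated_convergence(2)[where h="\<lambda>_. winv_max * (w_max * B * (2 * l))"])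
  have sub: "{-l..x} \<subseteq> {-l..l}" using x by auto
  show "(\<lambda>s. winv s * integral {-l..s} (\<lambda>t. w t * f k t)) integrable_on {-l..x}" for k
    by (rule integrable_continuous_interval, rule continuous_on_subset[OF volterra_integrand_continuous[OF fc] sub])
  show "(\<lambda>_. winv_max * (w_max * B * (2 * l))) integrable_on {-l..x}"
    by (rule integrable_continuous_interval) (rule continuous_on_const)
  show "norm (winv s * integral {-l..s} (\<lambda>t. w t * f k t)) \<le> winv_max * (w_max * B * (2 * l))"
    if "s \<in> {-l..x}" for k s
  proof -
    have s: "s \<in> {-l..l}" using that sub by auto
    have "\<bar>integral {-l..s} (\<lambda>t. w t * f k t)\<bar> \<le> w_max * B * (s + l)"
      by (rule weighted_primitive_bound[OF fc fb s])
    also have "\<dots> \<le> w_max * B * (2 * l)"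
      by (rule mult_left_mono) (use s w_max_pos B in auto)
    finally have "winv s * \<bar>integral {-l..s} (\<lambda>t. w t * f k t)\<bar> \<le> winv_max * (w_max * B * (2 * l))"
      by (intro mult_mono) (use winv_le[OF s] winv_pos[of s] winv_max_pos in auto)
    then show ?thesis using winv_pos[of s] by (simp add: abs_mult)
  qed
  show "(\<lambda>k. winv s * integral {-l..s} (\<lambda>t. w t * f k t)) \<longlonglongrightarrow> winv s * integral {-l..s} (\<lambda>t. w t * F t)"
    if "s \<in> {-l..x}" for s
    using that sub by (intro tendsto_mult_left weighted_primitive_tendsto[OF fc fb conv]) auto
qed

lemma shoot_fixpoint:
  assumes x: "x \<in> {-l..l}"
  shows "shoot lam x = volterra_base x - lam * volterra_op (shoot lam) x"
proof -
  define f where "f k t = (\<Sum>n<k. (-lam)^n * volterra_iter n t)" for k t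
  define B where "B = suminf (shoot_majorant \<bar>lam\<bar>)"
  have Ms0: "shoot_majorant \<Lambda> n \<ge> 0" if "\<Lambda> \<ge> 0" for \<Lambda> n
    using winv_max_pos w_max_pos l_pos that unfolding shoot_majorant_def by simp
  have B0: "B \<ge> 0" unfolding B_def using Ms0 by (intro suminf_nonneg shoot_majorant_summable) auto
  have fb: "\<bar>f k t\<bar> \<le> B" if t: "t \<in> {-l..l}" for k t
  proof -
    have "\<bar>f k t\<bar> \<le> (\<Sum>n<k. norm ((-lam)^n * volterra_iter n t))" unfolding f_def
      by (metis real_norm_def norm_sum)
    also have "\<dots> \<le> (\<Sum>n<k. shoot_majorant \<bar>lam\<bar> n)" by (intro sum_mono shoot_term_bound t) simp
    also have "\<dots> \<le> B" unfolding B_def by (rule sum_le_suminf[OF shoot_majorant_summable]) (use Ms0 in auto)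
    finally show ?thesis .
  qed
  have conv: "(\<lambda>k. f k t) \<longlonglongrightarrow> shoot lam t" if "t \<in> {-l..l}" for t
    unfolding f_def shoot_def by (rule summable_LIMSEQ[OF shoot_summable[OF that]])
  have fc: "continuous_on {-l..l} (f k)" for k
    unfolding f_def by (intro continuous_on_sum continuous_intros volterra_iter_continuous)
  have "(\<lambda>k. volterra_op (f k) x) \<longlonglongrightarrow> volterra_op (shoot lam) x" by (rule volterra_op_tendsto[OF fc B0 fb conv x])
  then have "(\<lambda>k. \<Sum>n<k. (-lam)^n * volterra_iter (Suc n) x) \<longlonglongrightarrow> volterra_op (shoot lam) x"
    unfolding f_def using volterra_op_partial_sum[OF x] by simp
  then have "(\<lambda>n. (-lam)^n * volterra_iter (Suc n) x) sums volterra_op (shoot lam) x" by (simp add: sums_def)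
  then have "(\<lambda>n. (-lam) * ((-lam)^n * volterra_iter (Suc n) x)) sums ((-lam) * volterra_op (shoot lam) x)" by (rule sums_mult)
  then have "(\<lambda>n. (-lam)^(Suc n) * volterra_iter (Suc n) x) sums ((-lam) * volterra_op (shoot lam) x)" by (simp add: mult.assoc)
  then have "(\<lambda>n. (-lam)^n * volterra_iter n x) sums ((-lam) * volterra_op (shoot lam) x + (-lam)^0 * volterra_iter 0 x)"
    by (subst (asm) sums_Suc_iff)
  then show ?thesis unfolding shoot_def by (simp add: sums_iff volterra_iter_0)
qed

definition shoot_flux where "shoot_flux lam x = 1 - lam * integral {-l..x} (\<lambda>t. w t * shoot lam t)"

lemma shoot_flux_continuous: "continuous_on {-l..l} (shoot_flux lam)"
  unfolding shoot_flux_def by (intro continuous_intros weighted_primitive_continuous shoot_continuous_in_x)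

lemma shoot_eq_integral: "x \<in> {-l..l} \<Longrightarrow> shoot lam x = integral {-l..x} (\<lambda>s. winv s * shoot_flux lam s)"
proof -
  assume x: "x \<in> {-l..l}"
  have sub: "{-l..x} \<subseteq> {-l..l}" using x by auto
  have i1: "winv integrable_on {-l..x}"
    by (rule integrable_continuous_interval, rule continuous_on_subset[OF winv_continuous sub])
  have i2: "(\<lambda>s. lam * (winv s * integral {-l..s} (\<lambda>t. w t * shoot lam t))) integrable_on {-l..x}"
    by (rule integrable_continuous_interval, rule continuous_on_subset[OF _ sub])
       (intro continuous_intros volterra_integrand_continuous shoot_continuous_in_x)
  have "shoot lam x = integral {-l..x} winv - integral {-l..x} (\<lambda>s. lam * (winv s * integral {-l..s} (\<lambda>t. w t * shoot lam t)))"
    using shoot_fixpoint[OF x] by (simp add: volterra_base_def volterra_op_def)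
  also have "\<dots> = integral {-l..x} (\<lambda>s. winv s - lam * (winv s * integral {-l..s} (\<lambda>t. w t * shoot lam t)))"
    by (rule integral_diff[OF i1 i2, symmetric])
  also have "\<dots> = integral {-l..x} (\<lambda>s. winv s * shoot_flux lam s)"
    by (simp add: shoot_flux_def algebra_simps)
  finally show ?thesis .
qed

lemma shoot_left: "shoot lam (-l) = 0"
  using shoot_fixpoint[of "-l" lam] l_pos by (simp add: volterra_base_def volterra_op_def)

lemma shoot_div_form_solution: "div_form_solution lam (shoot lam) (shoot_flux lam)"
  unfolding div_form_solution_def
proof
  fix x assume x: "x \<in> {-l..l}"
  have c: "continuous_on {-l..l} (\<lambda>s. winv s * shoot_flux lam s)" by (intro continuous_intros winv_continuous shoot_flux_continuous)
  have "((\<lambda>x. integral {-l..x} (\<lambda>s. winv s * shoot_flux lam s)) has_real_derivative winv x * shoot_flux lam x) (at x within {-l..l})"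
    by (rule integral_has_real_derivative[OF c x])
  then have "(shoot lam has_real_derivative winv x * shoot_flux lam x) (at x within {-l..l})"
    by (rule has_field_derivative_transform_within[OF _ zero_less_one x]) (simp add: shoot_eq_integral)
  moreover have "(shoot_flux lam has_real_derivative - lam * w x * shoot lam x) (at x within {-l..l})"
  proof -
    have wuc: "continuous_on {-l..l} (\<lambda>t. w t * shoot lam t)" by (intro continuous_intros w_continuous shoot_continuous_in_x)
    show ?thesis unfolding shoot_flux_def
      by (rule DERIV_cong[OF DERIV_diff[OF DERIV_const DERIV_cmult[OF integral_has_real_derivative[OF wuc x]]]]) simp
  qed
  ultimately show "(shoot lam has_real_derivative shoot_flux lam x * winv x) (at x within {-l..l}) \<and>
      (shoot_flux lam has_real_derivative - lam * w x * shoot lam x) (at x within {-l..l})"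
    by (simp add: mult.commute)
qed
lemma shoot_at_zero_pos:
  assumes x: "x \<in> {-l<..l}"
  shows "shoot 0 x > 0"
proof -
  have "shoot 0 x = volterra_base x" using shoot_fixpoint[of x 0] x by simp
  also have "volterra_base x > 0" unfolding volterra_base_def
    by (rule integral_pos_continuous[of _ _ _ x], rule continuous_on_subset[OF winv_continuous])
       (use x winv_pos in \<open>auto intro: less_imp_le\<close>)
  finally show ?thesis .
qed

lemma shoot_flux_lower_bound:
  assumes lam: "lam \<in> {0..\<Lambda>}" and s: "s \<in> {-l..l}"
  shows "1 - \<Lambda> * w_max * suminf (shoot_majorant \<Lambda>) * (s + l) \<le> shoot_flux lam s"
proof -
  have "\<bar>integral {-l..s} (\<lambda>t. w t * shoot lam t)\<bar> \<le> w_max * suminf (shoot_majorant \<Lambda>) * (s + l)"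
    by (rule weighted_primitive_bound[OF shoot_continuous_in_x _ s]) (use shoot_bound lam in auto)
  then have "\<bar>lam\<bar> * \<bar>integral {-l..s} (\<lambda>t. w t * shoot lam t)\<bar>
      \<le> \<Lambda> * (w_max * suminf (shoot_majorant \<Lambda>) * (s + l))"
    using lam s by (intro mult_mono) auto
  then show ?thesis unfolding shoot_flux_def abs_mult[symmetric] by (simp add: mult.assoc)
qed

lemma shoot_pos_near_left:
  assumes "0 \<le> \<Lambda>"
  obtains \<delta> where "0 < \<delta>" "\<delta> \<le> l"
    "\<And>lam x. lam \<in> {0..\<Lambda>} \<Longrightarrow> -l < x \<Longrightarrow> x \<le> -l + \<delta> \<Longrightarrow> shoot lam x > 0"
proof -
  define K where "K = \<Lambda> * w_max * suminf (shoot_majorant \<Lambda>)"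
  have "0 \<le> suminf (shoot_majorant \<Lambda>)"
    using shoot_bound[of 0 \<Lambda> 0] assms l_pos by force
  then have K0: "0 \<le> K" using assms w_max_pos by (simp add: K_def)
  define \<delta> where "\<delta> = min l (1 / (2 * (K + 1)))"
  have \<delta>: "0 < \<delta>" "\<delta> \<le> l" "K * \<delta> \<le> 1 / 2"
  proof -
    show "0 < \<delta>" "\<delta> \<le> l" using l_pos K0 by (auto simp: \<delta>_def)
    have "K * \<delta> \<le> K * (1 / (2 * (K + 1)))" using K0 by (intro mult_left_mono) (auto simp: \<delta>_def)
    also have "\<dots> \<le> 1 / 2" using K0 by (simp add: field_simps)
    finally show "K * \<delta> \<le> 1 / 2" .
  qed
  have "shoot lam x > 0" if lam: "lam \<in> {0..\<Lambda>}" and x: "-l < x" "x \<le> -l + \<delta>" for lam x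
  proof -
    have xl: "x \<in> {-l..l}" using x \<delta> by auto
    have flux: "shoot_flux lam s \<ge> 1 / 2" if s: "s \<in> {-l..x}" for s
    proof -
      have "K * (s + l) \<le> K * \<delta>" using s x K0 by (intro mult_left_mono) auto
      then show ?thesis using shoot_flux_lower_bound[OF lam, of s] s xl \<delta>(3) unfolding K_def by auto
    qed
    have "shoot lam x = integral {-l..x} (\<lambda>s. winv s * shoot_flux lam s)" by (rule shoot_eq_integral[OF xl])
    also have "\<dots> > 0"
    proof (rule integral_pos_continuous[of _ _ _ x])
      show "continuous_on {-l..x} (\<lambda>s. winv s * shoot_flux lam s)"
        by (rule continuous_on_subset[of "{-l..l}"])
           (use xl in \<open>intro continuous_intros winv_continuous shoot_flux_continuous, auto\<close>)
      show "0 \<le> winv s * shoot_flux lam s" if "s \<in> {-l..x}" for s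
        using flux[OF that] winv_pos[of s] by simp
      show "0 < winv x * shoot_flux lam x" using flux[of x] x winv_pos[of x] by simp
    qed (use x in auto)
    finally show ?thesis .
  qed
  with \<delta> show ?thesis using that by blast
qed

text \<open>By the trapezoid bound, a shooting solution positive on \<open>[-2l/3, 2l/3]\<close> has bounded parameter.\<close>
lemma shoot_nonpos_for_large_parameter:
  obtains \<Lambda> x where "0 < \<Lambda>" "x \<in> {-l<..<l}" "shoot \<Lambda> x \<le> 0"
proof -
  define s where "s = l / 3"
  define t where "t = 2 * l / 3"
  have st: "0 < s" "s < t" "t < l" using l_pos by (auto simp: s_def t_def)
  define I where "I = integral {-s..s} w"
  have I_pos: "I > 0" unfolding I_def
    by (rule integral_pos_continuous[of _ _ _ 0], rule continuous_on_subset[OF w_continuous])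
       (use st w_pos in \<open>auto intro: less_imp_le\<close>)
  define R where "R = (integral {-t..-s} w + integral {s..t} w) / (t - s)^2 / I"
  define \<Lambda> where "\<Lambda> = max R 0 + 1"
  have \<Lambda>: "\<Lambda> > 0" "\<Lambda> > R" by (auto simp: \<Lambda>_def)
  have "\<exists>x\<in>{-t..t}. shoot \<Lambda> x \<le> 0"
  proof (rule ccontr)
    assume "\<not> ?thesis"
    then have "\<forall>x\<in>{-t..t}. shoot \<Lambda> x > 0" by auto
    from positive_eigenvalue_trapezoid_bound[OF shoot_div_form_solution st this] \<Lambda>
    have "\<Lambda> * I \<le> (integral {-t..-s} w + integral {s..t} w) / (t - s)^2"
      by (simp add: I_def)
    then have "\<Lambda> \<le> R" unfolding R_def by (subst pos_le_divide_eq[OF I_pos]) simp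
    then show False using \<Lambda> by simp
  qed
  then obtain x where "x \<in> {-t..t}" "shoot \<Lambda> x \<le> 0" by blast
  then show ?thesis using that[of \<Lambda> x] \<Lambda> st by auto
qed

lemma shoot_touching_parameters_compact:
  assumes "0 \<le> \<Lambda>" "0 \<le> \<delta>"
  shows "compact {lam \<in> {0..\<Lambda>}. \<exists>x\<in>{-l+\<delta>..l}. shoot lam x \<le> 0}"
proof -
  define S where "S = {0..\<Lambda>} \<times> {-l+\<delta>..l}"
  have "continuous_on S (\<lambda>z. shoot (fst z) (snd z))"
    by (rule continuous_on_subset[OF shoot_continuous[of \<Lambda>]]) (use assms in \<open>auto simp: S_def\<close>)
  then have "closed {z \<in> S. shoot (fst z) (snd z) \<le> 0}"
    using continuous_on_closed_Collect_le[OF _ continuous_on_const, of S _ 0]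
    by (simp add: S_def closed_Times)
  then have "compact (S \<inter> {z \<in> S. shoot (fst z) (snd z) \<le> 0})"
    by (intro compact_Int_closed) (simp_all add: S_def compact_Times)
  then have "compact (fst ` {z \<in> S. shoot (fst z) (snd z) \<le> 0})"
    by (intro compact_continuous_image continuous_intros) (simp add: Int_absorb1)
  moreover have "fst ` {z \<in> S. shoot (fst z) (snd z) \<le> 0} = {lam \<in> {0..\<Lambda>}. \<exists>x\<in>{-l+\<delta>..l}. shoot lam x \<le> 0}"
    by (force simp: S_def)
  ultimately show ?thesis by simp
qed

text \<open>The eigenvalue is the least parameter at which the shooting solution touches zero in
  \<open>(-l, l]\<close>; compactness makes it a minimum.\<close>
lemma shoot_first_touching:
  obtains lam where "0 < lam" "\<And>x. x \<in> {-l<..l} \<Longrightarrow> 0 \<le> shoot lam x"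
    "\<exists>x\<in>{-l<..l}. shoot lam x \<le> 0"
proof -
  obtain \<Lambda> x0 where \<Lambda>: "0 < \<Lambda>" and x0: "x0 \<in> {-l<..<l}" "shoot \<Lambda> x0 \<le> 0"
    by (rule shoot_nonpos_for_large_parameter)
  obtain \<delta> where \<delta>: "0 < \<delta>" "\<delta> \<le> l"
    and near: "\<And>lam x. lam \<in> {0..\<Lambda>} \<Longrightarrow> -l < x \<Longrightarrow> x \<le> -l + \<delta> \<Longrightarrow> shoot lam x > 0"
    using shoot_pos_near_left[of \<Lambda>] \<Lambda> by auto
  define Z where "Z = {lam \<in> {0..\<Lambda>}. \<exists>x\<in>{-l+\<delta>..l}. shoot lam x \<le> 0}"
  have Z_closed: "closed Z"
    unfolding Z_def using shoot_touching_parameters_compact \<Lambda> \<delta> by (simp add: compact_imp_closed)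
  have "\<not> x0 \<le> -l + \<delta>" using near[of \<Lambda> x0] x0 \<Lambda> by auto
  then have "\<Lambda> \<in> Z" using x0 \<Lambda> by (auto simp: Z_def)
  have bdd: "bdd_below Z" by (rule bdd_belowI[of _ 0]) (auto simp: Z_def)
  define lam where "lam = Inf Z"
  have "lam \<in> Z" unfolding lam_def by (rule closed_contains_Inf[OF _ bdd Z_closed]) (use \<open>\<Lambda> \<in> Z\<close> in auto)
  then obtain x1 where x1: "x1 \<in> {-l+\<delta>..l}" "shoot lam x1 \<le> 0" and lam: "lam \<in> {0..\<Lambda>}"
    by (auto simp: Z_def)
  have below: "shoot lam' x > 0" if lam': "lam' \<in> {0..<lam}" and x: "x \<in> {-l<..l}" for lam' x
  proof (cases "x \<le> -l + \<delta>")
    case True then show ?thesis using near[of lam' x] lam lam' x by auto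
  next
    case False
    have "lam' \<notin> Z" using cInf_lower[OF _ bdd, of lam'] lam' unfolding lam_def by auto
    then show ?thesis using lam lam' x False by (auto simp: Z_def not_le)
  qed
  have "lam \<noteq> 0" using shoot_at_zero_pos[of x1] x1 \<delta> by auto
  then have lam_pos: "0 < lam" using lam by simp
  have "0 \<le> shoot lam x" if x: "x \<in> {-l<..l}" for x
  proof -
    have "continuous_on (closure {0..<lam}) (\<lambda>lam. shoot lam x)"
      using lam_pos lam x
      by (auto intro: continuous_on_subset[OF shoot_continuous_in_lam[of x \<Lambda>]])
    moreover have "lam \<in> closure {0..<lam}" using lam_pos by simp
    moreover have "0 \<le> shoot lam' x" if "lam' \<in> {0..<lam}" for lam'
      using below[OF that x] by simp
    ultimately show ?thesis by (rule continuous_ge_on_closure)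
  qed
  with lam_pos x1 \<delta> show ?thesis using that by force
qed

text \<open>At an interior zero \<open>u\<close> attains a minimum, so the flux \<open>V\<close> vanishes there; since \<open>V\<close>
  decreases, \<open>u\<close> is nondecreasing to the left of that zero.\<close>
lemma div_form_solution_interior_pos:
  assumes s: "div_form_solution lam u V" and lam: "0 \<le> lam"
    and nonneg: "\<And>x. x \<in> {-l..l} \<Longrightarrow> 0 \<le> u x"
    and y: "-l \<le> y" "y < x0" "u y > 0" and x0: "x0 \<in> {-l<..<l}"
  shows "u x0 > 0"
proof (rule ccontr)
  assume "\<not> u x0 > 0"
  moreover have "0 \<le> u x0" using nonneg x0 by auto
  ultimately have zero: "u x0 = 0" by simp
  have interior: "t \<in> {-l<..<l}" if "y < t" "t < x0" for t using that y x0 by auto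
  have sub: "{y..x0} \<subseteq> {-l..l}" using y x0 by auto
  have "V x0 * winv x0 = 0"
    using div_form_solution_deriv_at(1)[OF s x0]
  proof (rule DERIV_local_min)
    show "0 < min (x0 + l) (l - x0)" using x0 by auto
    show "\<forall>y. \<bar>x0 - y\<bar> < min (x0 + l) (l - x0) \<longrightarrow> u x0 \<le> u y"
      using nonneg zero by (auto simp: abs_less_iff)
  qed
  then have V0: "V x0 = 0" using winv_pos[of x0] by simp
  have V_nonneg: "0 \<le> V z" if z: "z \<in> {y..x0}" for z
  proof -
    have "V x0 \<le> V z"
    proof (rule DERIV_nonpos_imp_decreasing_open[of z x0 V])
      fix t assume "z < t" "t < x0"
      then have t: "t \<in> {-l<..<l}" using z by (intro interior) auto
      have "0 \<le> lam * w t * u t"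
        using lam w_pos[of t] nonneg[of t] t by (intro mult_nonneg_nonneg) auto
      then show "\<exists>D. (V has_real_derivative D) (at t) \<and> D \<le> 0"
        using div_form_solution_deriv_at(2)[OF s t] by auto
    next
      show "continuous_on {z..x0} V"
        using div_form_solution_continuous(2)[OF s] sub z by (auto intro: continuous_on_subset)
    qed (use z in auto)
    then show ?thesis using V0 by simp
  qed
  have "u y \<le> u x0"
  proof (rule DERIV_nonneg_imp_increasing_open[of y x0 u])
    fix t assume t: "y < t" "t < x0"
    have "0 \<le> V t * winv t"
      using V_nonneg[of t] winv_pos[of t] t by (intro mult_nonneg_nonneg) auto
    then show "\<exists>D. (u has_real_derivative D) (at t) \<and> 0 \<le> D"
      using div_form_solution_deriv_at(1)[OF s interior[OF t]] by auto
  next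
    show "continuous_on {y..x0} u"
      using div_form_solution_continuous(1)[OF s] sub by (rule continuous_on_subset)
  qed (use y in auto)
  then show False using y zero by simp
qed

lemma div_form_positive_solution_exists:
  obtains lam u V where "div_form_solution lam u V" "u (-l) = 0" "u l = 0"
    "\<forall>x\<in>{-l<..<l}. u x > 0" "lam \<ge> 0"
proof -
  obtain lam where lam: "0 < lam" and nonneg: "\<And>x. x \<in> {-l<..l} \<Longrightarrow> 0 \<le> shoot lam x"
    and touch: "\<exists>x\<in>{-l<..l}. shoot lam x \<le> 0"
    by (rule shoot_first_touching) blast
  obtain \<delta> where \<delta>: "0 < \<delta>" and near: "\<And>x. -l < x \<Longrightarrow> x \<le> -l + \<delta> \<Longrightarrow> shoot lam x > 0"
    using shoot_pos_near_left[of lam] lam by (metis atLeastAtMost_iff less_eq_real_def order_refl)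
  have nonneg': "0 \<le> shoot lam x" if "x \<in> {-l..l}" for x
    using nonneg[of x] shoot_left[of lam] that by (cases "x = -l") auto
  have pos: "shoot lam x > 0" if x: "x \<in> {-l<..<l}" for x
  proof (rule div_form_solution_interior_pos[OF shoot_div_form_solution _ nonneg' _ _ _ x])
    show "-l \<le> -l + min \<delta> (x + l) / 2" "-l + min \<delta> (x + l) / 2 < x"
      using \<delta> x by (auto simp: min_def)
    show "shoot lam (-l + min \<delta> (x + l) / 2) > 0"
      by (rule near) (use \<delta> x in auto)
  qed (use lam in auto)
  have "shoot lam l = 0"
    using touch pos nonneg[of l] l_pos by (metis greaterThanAtMost_iff greaterThanLessThan_iff
        le_less not_le order.antisym)
  then show ?thesis using that[OF shoot_div_form_solution[of lam] shoot_left[of lam]] pos lam by auto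
qed

section \<open>Bounds on the principal eigenvalue\<close>

lemma principal_eigenvalueE:
  obtains u V where "div_form_solution (principal_eigenvalue a l p) u V" "u (-l) = 0" "u l = 0"
    "\<forall>x\<in>{-l<..<l}. u x > 0" "principal_eigenvalue a l p \<ge> 0"
proof -
  obtain lam u V where s: "div_form_solution lam u V" and bc: "u (-l) = 0" "u l = 0"
    and pos: "\<forall>x\<in>{-l<..<l}. u x > 0" and lam0: "lam \<ge> 0"
    by (rule div_form_positive_solution_exists)
  have "principal_eigenvalue a l p = lam" unfolding principal_eigenvalue_def
  proof (rule the_equality)
    show "\<exists>u. positive_eigenpair a l p lam u"
      using positive_eigenpair_if_div_form_solution[OF s bc pos] by blast
    fix lam' assume "\<exists>u. positive_eigenpair a l p lam' u"
    then obtain u' where ep: "positive_eigenpair a l p lam' u'" by blast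
    then obtain V' where s': "div_form_solution lam' u' V'"
      using div_form_solution_if_positive_eigenpair by blast
    from ep have "u' (-l) = 0" "u' l = 0" "\<forall>x\<in>{-l<..<l}. u' x > 0"
      unfolding positive_eigenpair_def by auto
    then show "lam' = lam" using positive_eigenvalue_unique[OF s' s] bc pos by blast
  qed
  then show ?thesis using that s bc pos lam0 by simp
qed

lemma principal_eigenvalue_lower:
  "principal_eigenvalue a l p \<ge> exp (- p * (bmax - bmin)) / (4 * l^2)"
proof -
  obtain u V where "div_form_solution (principal_eigenvalue a l p) u V" "u (-l) = 0" "u l = 0"
    "\<forall>x\<in>{-l<..<l}. u x > 0" "principal_eigenvalue a l p \<ge> 0"
    by (rule principal_eigenvalueE)
  then have "principal_eigenvalue a l p \<ge> 1 / (4 * l^2 * winv_max * w_max)"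
    by (rule positive_eigenvalue_lower_bound)
  moreover have "1 / (4 * l^2 * winv_max * w_max) = exp (- p * (bmax - bmin)) / (4 * l^2)"
    by (simp add: winv_max_def w_max_def exp_minus exp_diff field_simps)
  ultimately show ?thesis by simp
qed

lemma integral_w_upper:
  assumes "c \<le> d" "{c..d} \<subseteq> {-l..l}" "\<And>x. x \<in> {c..d} \<Longrightarrow> B \<le> b x"
  shows "integral {c..d} w \<le> exp (- p * B) * (d - c)"
proof -
  have "norm (integral {c..d} w) \<le> exp (- p * B) * (d - c)"
    by (rule integral_bound[OF assms(1) continuous_on_subset[OF w_continuous assms(2)]])
       (use assms(3) p_pos w_pos in \<open>auto simp: w_def\<close>)
  then show ?thesis by simp
qed

lemma integral_w_lower:
  assumes "c \<le> d" "{c..d} \<subseteq> {-l..l}" "\<And>x. x \<in> {c..d} \<Longrightarrow> b x \<le> B"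
  shows "exp (- p * B) * (d - c) \<le> integral {c..d} w"
proof -
  have "integral {c..d} (\<lambda>_. exp (- p * B)) \<le> integral {c..d} w"
    by (rule integral_le[OF integrable_continuous_interval[OF continuous_on_const] w_integrable[OF assms(2)]])
       (use assms(3) p_pos in \<open>auto simp: w_def\<close>)
  then show ?thesis using assms(1) by (simp add: mult.commute)
qed

text \<open>Upper bound from the trapezoid test function: \<open>b \<ge> B\<^sub>2\<close> on its slopes \<open>\<plusminus>[s, t]\<close>, and
  \<open>b \<le> B\<^sub>1\<close> near a point of its plateau.\<close>
lemma principal_eigenvalue_upper:
  assumes st: "0 < s" "s < t" "t < l" and d: "0 < \<delta>" "{x1 - \<delta>..x1 + \<delta>} \<subseteq> {-s..s}"
    and hi: "\<And>x. x \<in> {s..t} \<union> {-t..-s} \<Longrightarrow> b x \<ge> B2"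
    and lo: "\<And>x. x \<in> {x1 - \<delta>..x1 + \<delta>} \<Longrightarrow> b x \<le> B1"
  shows "principal_eigenvalue a l p \<le> exp (- p * (B2 - B1)) / ((t - s) * \<delta>)"
proof -
  define lam where "lam = principal_eigenvalue a l p"
  obtain u V where s: "div_form_solution lam u V" "u (-l) = 0" "u l = 0" "\<forall>x\<in>{-l<..<l}. u x > 0" "lam \<ge> 0"
    unfolding lam_def by (rule principal_eigenvalueE)
  have left: "integral {-t..-s} w \<le> exp (- p * B2) * (-s - -t)"
    by (rule integral_w_upper) (use hi st in auto)
  have right: "integral {s..t} w \<le> exp (- p * B2) * (t - s)"
    by (rule integral_w_upper) (use hi st in auto)
  have "lam * integral {-s..s} w \<le> (integral {-t..-s} w + integral {s..t} w) / (t - s)^2"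
    by (rule positive_eigenvalue_trapezoid_bound[OF s(1) st _ s(5)]) (use s(4) st in auto)
  also have "\<dots> \<le> (2 * exp (- p * B2) * (t - s)) / (t - s)^2"
    using left right by (intro divide_right_mono) auto
  finally have upper: "lam * integral {-s..s} w \<le> 2 * exp (- p * B2) / (t - s)"
    using st by (simp add: power2_eq_square)
  have "exp (- p * B1) * (x1 + \<delta> - (x1 - \<delta>)) \<le> integral {x1 - \<delta>..x1 + \<delta>} w"
    by (rule integral_w_lower) (use lo d st in auto)
  also have "\<dots> \<le> integral {-s..s} w"
    by (rule integral_subset_le[OF d(2) w_integrable w_integrable]) (use d st w_pos in \<open>auto intro: less_imp_le\<close>)
  finally have "exp (- p * B1) * (2 * \<delta>) \<le> integral {-s..s} w" by simp
  then have "lam * (exp (- p * B1) * (2 * \<delta>)) \<le> lam * integral {-s..s} w"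
    using s(5) by (rule mult_left_mono)
  with upper have "lam * (exp (- p * B1) * (2 * \<delta>)) \<le> 2 * exp (- p * B2) / (t - s)" by linarith
  moreover have "exp (- p * B1) * (2 * \<delta>) > 0" using d by simp
  ultimately have "lam \<le> 2 * exp (- p * B2) / (t - s) / (exp (- p * B1) * (2 * \<delta>))"
    by (simp only: pos_le_divide_eq)
  also have "\<dots> = exp (- p * (B2 - B1)) / ((t - s) * \<delta>)"
  proof -
    have e: "exp (- p * (B2 - B1)) = exp (- p * B2) / exp (- p * B1)"
      by (simp add: exp_diff[symmetric] algebra_simps)
    show ?thesis unfolding e using st d by (simp add: field_simps)
  qed
  finally show ?thesis unfolding lam_def .
qed

end

section \<open>Exponential rate\<close>

lemma principal_eigenvalue_log_rate:
  fixes a b :: "real \<Rightarrow> real"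
  assumes l: "0 < l" and N: "negligible N" and a: "\<And>x. \<bar>a x\<bar> \<le> M"
    and deriv: "\<And>x. x \<in> {-l<..<l} \<Longrightarrow> x \<notin> N \<Longrightarrow> (b has_real_derivative a x) (at x)"
    and lip: "L-lipschitz_on {-l..l} b" and even: "\<And>x. x \<in> {-l..l} \<Longrightarrow> b (- x) = b x"
    and x12: "0 \<le> x1" "x1 < x2" "x2 \<le> l"
    and extremal: "\<And>x. x \<in> {0..l} \<Longrightarrow> b x1 \<le> b x" "\<And>x. x \<in> {0..l} \<Longrightarrow> b x \<le> b x2"
  shows "((\<lambda>p. (1 / p) * ln (1 / principal_eigenvalue a l p)) \<longlongrightarrow> b x2 - b x1) at_top"
proof (rule tendsto_log_inverse_exp_rate)
  have problem: "drift_eigenproblem a b l p M L N" if "0 < p" for p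
    using l N a deriv lip that by unfold_locales
  have range: "b x1 \<le> b x \<and> b x \<le> b x2" if "x \<in> {-l..l}" for x
    using extremal[of x] extremal[of "- x"] even[OF that] that by (cases "x \<ge> 0") auto
  fix e :: real assume "e > 0"
  then obtain s t \<delta> where st: "0 < s" "s < t" "t < l" and \<delta>: "0 < \<delta>" "{x1 - \<delta>..x1 + \<delta>} \<subseteq> {-s..s}"
    and hi: "\<And>x. x \<in> {s..t} \<Longrightarrow> b x2 - e / 2 \<le> b x"
    and lo: "\<And>x. x \<in> {x1 - \<delta>..x1 + \<delta>} \<Longrightarrow> b x \<le> b x1 + e / 2"
    using separated_level_windowE[OF lipschitz_on_continuous_on[OF lip] x12, of "e / 2"] by auto
  have hi': "b x2 - e / 2 \<le> b x" if "x \<in> {s..t} \<union> {-t..-s}" for x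
    using hi[of x] hi[of "- x"] even[of x] that st by auto
  show "\<exists>c K. c > 0 \<and> K > 0 \<and> (\<forall>p>0. K * exp (- p * (b x2 - b x1)) \<le> principal_eigenvalue a l p
      \<and> principal_eigenvalue a l p \<le> exp (- p * (b x2 - b x1 - e)) / c)"
  proof (intro exI conjI allI impI)
    show "(t - s) * \<delta> > 0" "1 / (4 * l^2) > 0" using st \<delta> l by simp_all
    fix p :: real assume p: "p > 0"
    interpret drift_eigenproblem a b l p M L N by (rule problem[OF p])
    have "bmin = b x1" "bmax = b x2" unfolding bmin_def bmax_def
      using x12 range by (auto intro!: cInf_eq_minimum cSup_eq_maximum)
    then show "1 / (4 * l^2) * exp (- p * (b x2 - b x1)) \<le> principal_eigenvalue a l p"
      using principal_eigenvalue_lower by simp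
    have "principal_eigenvalue a l p \<le> exp (- p * ((b x2 - e / 2) - (b x1 + e / 2))) / ((t - s) * \<delta>)"
      by (rule principal_eigenvalue_upper[OF st \<delta> hi' lo])
    then show "principal_eigenvalue a l p \<le> exp (- p * (b x2 - b x1 - e)) / ((t - s) * \<delta>)"
      by (simp add: algebra_simps)
  qed
qed

text \<open>An everywhere defined, bounded representative of \<open>a\<close>; \<open>b\<close> is even because \<open>a\<close> is odd.\<close>
lemma regular_representativeE:
  fixes a b :: "real \<Rightarrow> real"
  assumes a_bdd: "\<exists>M. AE x in lborel. x \<in> {-l<..<l} \<longrightarrow> \<bar>a x\<bar> \<le> M"
    and a_odd: "AE x in lborel. x \<in> {-l<..<l} \<longrightarrow> a (- x) = - a x"
    and b_prim: "AE x in lborel. x \<in> {-l<..<l} \<longrightarrow> (b has_real_derivative a x) (at x)"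
    and lip: "L-lipschitz_on {-l..l} b"
  obtains N a_reg M where "negligible N" "\<And>x. \<bar>a_reg x\<bar> \<le> M"
    "\<And>x. x \<in> {-l<..<l} \<Longrightarrow> x \<notin> N \<Longrightarrow> (b has_real_derivative a_reg x) (at x)"
    "\<And>x. x \<in> {-l..l} \<Longrightarrow> b (- x) = b x"
    "\<And>p. principal_eigenvalue a_reg l p = principal_eigenvalue a l p"
proof -
  obtain M where M: "AE x in lborel. x \<in> {-l<..<l} \<longrightarrow> \<bar>a x\<bar> \<le> M" using a_bdd by blast
  define good where "good x \<longleftrightarrow> \<bar>a x\<bar> \<le> M \<and> (b has_real_derivative a x) (at x) \<and> a (- x) = - a x" for x
  have AE_good: "AE x in lborel. x \<in> {-l<..<l} \<longrightarrow> good x"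
    using M a_odd b_prim unfolding good_def by eventually_elim auto
  obtain N where N: "negligible N" and N_good: "\<And>x. x \<notin> N \<Longrightarrow> x \<in> {-l<..<l} \<longrightarrow> good x"
    using AE_lborel_negligibleE[OF AE_good] by blast
  define a_reg where "a_reg x = (if x \<in> {-l<..<l} \<and> good x then a x else 0)" for x
  have "\<bar>a_reg x\<bar> \<le> max M 0" for x by (auto simp: a_reg_def good_def)
  moreover have "(b has_real_derivative a_reg x) (at x)" if "x \<in> {-l<..<l}" "x \<notin> N" for x
  proof -
    have "good x" using N_good[of x] that by simp
    then have "a_reg x = a x" using that by (simp add: a_reg_def)
    with \<open>good x\<close> show ?thesis by (simp add: good_def)
  qed
  moreover have "b (- x) = b x" if "x \<in> {-l..l}" for x
    by (rule lipschitz_even_if_ae_derivative_odd[where a = a, OF lip N _ _ that]) (use N_good in \<open>auto simp: good_def\<close>)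
  moreover have "AE x in lborel. x \<in> {-l<..<l} \<longrightarrow> a_reg x = a x"
    using AE_good by eventually_elim (simp add: a_reg_def)
  then have "principal_eigenvalue a_reg l p = principal_eigenvalue a l p" for p
    by (rule principal_eigenvalue_cong_AE)
  ultimately show ?thesis using that[OF N] by blast
qed

theorem mainTheorem4:
  fixes a b :: "real \<Rightarrow> real" and l :: real
  assumes l_pos: "l > 0"
    and a_meas: "set_borel_measurable lborel {-l<..<l} a"
    and a_bdd: "\<exists>M. AE x in lborel. x \<in> {-l<..<l} \<longrightarrow> \<bar>a x\<bar> \<le> M"
    and a_odd: "AE x in lborel. x \<in> {-l<..<l} \<longrightarrow> a (- x) = - a x"
    and b_lip: "\<exists>L. L-lipschitz_on {-l..l} b"
    and b_prim: "AE x in lborel. x \<in> {-l<..<l} \<longrightarrow> (b has_real_derivative a x) (at x)"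
    and B12: "Sup {x\<in>{0..l}. b x = (INF y\<in>{0..l}. b y)}
              < Inf {x\<in>{0..l}. b x = (SUP y\<in>{0..l}. b y)}"
  shows "((\<lambda>p. (1 / p) * ln (1 / principal_eigenvalue a l p))
           \<longlongrightarrow> (SUP y\<in>{0..l}. b y) - (INF y\<in>{0..l}. b y)) at_top"
proof -
  obtain L where L: "L-lipschitz_on {-l..l} b" using b_lip by blast
  obtain N a_reg M where N: "negligible N" and a_reg: "\<And>x. \<bar>a_reg x\<bar> \<le> M"
    and deriv: "\<And>x. x \<in> {-l<..<l} \<Longrightarrow> x \<notin> N \<Longrightarrow> (b has_real_derivative a_reg x) (at x)"
    and even: "\<And>x. x \<in> {-l..l} \<Longrightarrow> b (- x) = b x"
    and same: "\<And>p. principal_eigenvalue a_reg l p = principal_eigenvalue a l p"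
    by (rule regular_representativeE[OF a_bdd a_odd b_prim L]) blast
  have "continuous_on {0..l} b"
    by (rule continuous_on_subset[OF lipschitz_on_continuous_on[OF L]]) (use l_pos in auto)
  then obtain x1 x2 where x12: "0 \<le> x1" "x1 < x2" "x2 \<le> l"
    and extremal: "\<And>x. x \<in> {0..l} \<Longrightarrow> b x1 \<le> b x" "\<And>x. x \<in> {0..l} \<Longrightarrow> b x \<le> b x2"
    by (rule separated_extremal_pointsE) (use l_pos B12 in auto)
  have "(INF y\<in>{0..l}. b y) = b x1" "(SUP y\<in>{0..l}. b y) = b x2"
    using x12 extremal by (auto intro!: cInf_eq_minimum cSup_eq_maximum)
  with principal_eigenvalue_log_rate[OF l_pos N a_reg deriv L even x12 extremal] show ?thesis
    by (simp add: same)
qed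

end
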